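(* (a) Let $\mu$ be a real matrix measure on $[0,1]$ with canonical moments $U_n^\mu$, let $a<b$, $\gamma(x)=(b-a)x+a$, and let $\nu=\mu^\gamma$ be the image measure on $[a,b]$ with canonical moments $U_n^\nu$. Then $U_n^\nu=U_n^\mu$ whenever these are defined. (b) If a matrix measure on an interval $[a,b]$ is symmetric (invariant under the reflection $x\mapsto a+b-x$), then its odd canonical moments satisfy $U_{2n-1}=\tfrac12I_p$ whenever defined. (c) Let $\mu$ be a matrix measure on $[0,1]$ with canonical moments $U_n^\mu$ and let $\sigma$ be the symmetric matrix measure on $[-1,1]$ determined by $\sigma([-x,x])=\mu([0,x^2])$, with canonical moments $U_n^\sigma$. Then $U^\sigma_{2n-1}=\tfrac12I_p$ and $U^\sigma_{2n}=U^\mu_n$ whenever defined.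
   Context: A real matrix measure on an interval $[a,b]$ is a $p\times p$ matrix of signed Borel measures $\mu$ with $\mu(B)$ symmetric nonnegative definite for every Borel $B\subset[a,b]$ and $\mu([a,b])=I_p$; its moments are $T_k=\int x^kd\mu(x)$, $T_0=I_p$. For given moments $T_0,\dots,T_{k-1}$ of such a measure, let $T_k^+$ and $T_k^-$ denote the maximal and minimal matrices (in the Loewner order) $T$ such that $(T_1,\dots,T_{k-1},T)$ is the moment vector of a matrix measure on $[a,b]$. When $T_k^+-T_k^->0$ (positive definite), the ($k$th, symmetric) canonical moment is $U_k=(T_k^+-T_k^-)^{-1/2}(T_k-T_k^-)(T_k^+-T_k^-)^{-1/2}$; otherwise it is undefined. (For $[0,1]$ these extremes $S_k^\pm$ are given by explicit Hankel-matrix formulas and the canonical moments are defined whenever the moment vector lies in the interior of the moment space.) *)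

theory Defs
  imports "HOL-Analysis.Analysis"
begin

definition psd_mat :: "real^'p^'p \<Rightarrow> bool" where
  "psd_mat M \<longleftrightarrow> (\<forall>x. 0 \<le> x \<bullet> (M *v x))"

definition pd_mat :: "real^'p^'p \<Rightarrow> bool" where
  "pd_mat M \<longleftrightarrow> (\<forall>x. x \<noteq> 0 \<longrightarrow> 0 < x \<bullet> (M *v x))"

definition loewner_le :: "real^'p^'p \<Rightarrow> real^'p^'p \<Rightarrow> bool" where
  "loewner_le A B \<longleftrightarrow> psd_mat (B - A)"

definition mat_sqrt :: "real^'p^'p \<Rightarrow> real^'p^'p" where
  "mat_sqrt A = (THE S. transpose S = S \<and> pd_mat S \<and> S ** S = A)"

text \<open>A finite signed Borel measure on [a,b] (given as a real-valued set function,
  extended by zero outside [a,b]) is represented through a Jordan-type decomposition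
  s = M1 - M2 with M1, M2 finite Borel measures concentrated on [a,b].\<close>
definition signed_rep :: "real \<Rightarrow> real \<Rightarrow> (real set \<Rightarrow> real) \<Rightarrow> real measure \<Rightarrow> real measure \<Rightarrow> bool" where
  "signed_rep a b s M1 M2 \<longleftrightarrow>
     sets M1 = sets borel \<and> sets M2 = sets borel \<and>
     finite_measure M1 \<and> finite_measure M2 \<and>
     emeasure M1 (- {a..b}) = 0 \<and> emeasure M2 (- {a..b}) = 0 \<and>
     (\<forall>B \<in> sets borel. s B = measure M1 B - measure M2 B)"

definition signed_borel_measure :: "real \<Rightarrow> real \<Rightarrow> (real set \<Rightarrow> real) \<Rightarrow> bool" where
  "signed_borel_measure a b s \<longleftrightarrow> (\<exists>M1 M2. signed_rep a b s M1 M2)"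

text \<open>Integral of f with respect to a signed measure (independent of the chosen decomposition).\<close>
definition signed_integral :: "real \<Rightarrow> real \<Rightarrow> (real set \<Rightarrow> real) \<Rightarrow> (real \<Rightarrow> real) \<Rightarrow> real" where
  "signed_integral a b s f =
     (let P = (SOME P. signed_rep a b s (fst P) (snd P))
      in integral\<^sup>L (fst P) f - integral\<^sup>L (snd P) f)"

definition matrix_measure :: "real \<Rightarrow> real \<Rightarrow> (real set \<Rightarrow> real^'p^'p) \<Rightarrow> bool" where
  "matrix_measure a b \<mu> \<longleftrightarrow>
     (\<forall>i j. signed_borel_measure a b (\<lambda>B. \<mu> B $ i $ j)) \<and>
     (\<forall>B \<in> sets borel. B \<subseteq> {a..b} \<longrightarrow> transpose (\<mu> B) = \<mu> B \<and> psd_mat (\<mu> B)) \<and>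
     \<mu> {a..b} = mat 1"

definition mat_moment :: "real \<Rightarrow> real \<Rightarrow> (real set \<Rightarrow> real^'p^'p) \<Rightarrow> nat \<Rightarrow> real^'p^'p" where
  "mat_moment a b \<mu> k = (\<chi> i j. signed_integral a b (\<lambda>B. \<mu> B $ i $ j) (\<lambda>x. x ^ k))"

definition moment_range :: "real \<Rightarrow> real \<Rightarrow> (real set \<Rightarrow> real^'p^'p) \<Rightarrow> nat \<Rightarrow> (real^'p^'p) set" where
  "moment_range a b \<mu> k = {T. \<exists>\<mu>'. matrix_measure a b \<mu>' \<and>
      (\<forall>j<k. mat_moment a b \<mu>' j = mat_moment a b \<mu> j) \<and> mat_moment a b \<mu>' k = T}"

definition is_upper_moment :: "real \<Rightarrow> real \<Rightarrow> (real set \<Rightarrow> real^'p^'p) \<Rightarrow> nat \<Rightarrow> real^'p^'p \<Rightarrow> bool" where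
  "is_upper_moment a b \<mu> k T \<longleftrightarrow> T \<in> moment_range a b \<mu> k \<and> (\<forall>T' \<in> moment_range a b \<mu> k. loewner_le T' T)"

definition is_lower_moment :: "real \<Rightarrow> real \<Rightarrow> (real set \<Rightarrow> real^'p^'p) \<Rightarrow> nat \<Rightarrow> real^'p^'p \<Rightarrow> bool" where
  "is_lower_moment a b \<mu> k T \<longleftrightarrow> T \<in> moment_range a b \<mu> k \<and> (\<forall>T' \<in> moment_range a b \<mu> k. loewner_le T T')"

definition upper_moment :: "real \<Rightarrow> real \<Rightarrow> (real set \<Rightarrow> real^'p^'p) \<Rightarrow> nat \<Rightarrow> real^'p^'p" where
  "upper_moment a b \<mu> k = (THE T. is_upper_moment a b \<mu> k T)"

definition lower_moment :: "real \<Rightarrow> real \<Rightarrow> (real set \<Rightarrow> real^'p^'p) \<Rightarrow> nat \<Rightarrow> real^'p^'p" where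
  "lower_moment a b \<mu> k = (THE T. is_lower_moment a b \<mu> k T)"

definition canonical_moment :: "real \<Rightarrow> real \<Rightarrow> (real set \<Rightarrow> real^'p^'p) \<Rightarrow> nat \<Rightarrow> (real^'p^'p) option" where
  "canonical_moment a b \<mu> k =
     (if (\<exists>T. is_upper_moment a b \<mu> k T) \<and> (\<exists>T. is_lower_moment a b \<mu> k T) \<and>
         pd_mat (upper_moment a b \<mu> k - lower_moment a b \<mu> k)
      then (let R = matrix_inv (mat_sqrt (upper_moment a b \<mu> k - lower_moment a b \<mu> k))
            in Some (R ** (mat_moment a b \<mu> k - lower_moment a b \<mu> k) ** R))
      else None)"

end

theory Submission
  imports Defs
begin

text \<open>
  All three statements follow from one principle: a canonical moment \<open>U\<^sub>k\<close> depends only on the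
  set of attainable \<open>k\<close>-th moments given the lower ones (the moment range) and on the position
  of \<open>T\<^sub>k\<close> in it, and it is unchanged when the moment range and \<open>T\<^sub>k\<close> are moved together by a
  positive affine map \<open>T \<mapsto> c T + C\<close> (lemma canonical_moment_affine_range).
  (a) Pushing measures forward under \<open>\<gamma>(x) = (b - a) x + a\<close> is a bijection between matrix
      measures on \<open>[0, 1]\<close> and on \<open>[a, b]\<close>; by the binomial theorem it moves the moment range
      by \<open>T \<mapsto> (b - a)\<^sup>k T + C\<close>.
  (b) For a symmetric measure the reflection \<open>x \<mapsto> a + b - x\<close> maps the moment range of odd
      order onto itself by \<open>T \<mapsto> 2 T\<^sub>k - T\<close>, so \<open>T\<^sub>k\<close> is the midpoint of \<open>T\<^sub>k\<^sup>-\<close> and \<open>T\<^sub>k\<^sup>+\<close>.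
  (c) The square map and the symmetrization \<open>y \<mapsto> \<plusminus>sqrt y\<close> identify the moment range of
      \<open>\<sigma>\<close> at order \<open>2 n\<close> with that of \<open>\<mu>\<close> at order \<open>n\<close>; odd orders are covered by (b).
\<close>

text \<open>Sums serve
  twice: two representations \<open>M1 - M2\<close> and \<open>N1 - N2\<close> describe the same signed measure iff
  \<open>M1 + N2 = N1 + M2\<close>, and the average of two signed measures is represented by halved sums.\<close>

lemma borel_measurable_sets_borel:
  "sets M = sets borel \<Longrightarrow> f \<in> borel_measurable borel \<Longrightarrow> f \<in> borel_measurable M"
  using measurable_cong_sets[of M borel borel borel] by auto

lemma space_sets_borel: "sets M = sets borel \<Longrightarrow> space M = UNIV"
  using sets_eq_imp_space_eq by fastforce

definition add_measure :: "real measure \<Rightarrow> real measure \<Rightarrow> real measure" where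
  "add_measure M N = measure_of UNIV (sets borel) (\<lambda>A. emeasure M A + emeasure N A)"

lemma sets_add_measure [simp]: "sets (add_measure M N) = sets borel"
  using sets.sigma_algebra_axioms[of "borel :: real measure"]
  unfolding add_measure_def by (simp add: sigma_algebra.sigma_sets_eq)

lemma space_add_measure [simp]: "space (add_measure M N) = UNIV"
  unfolding add_measure_def by (simp add: space_measure_of_conv)

lemma emeasure_add_measure:
  assumes M: "sets M = sets borel" and N: "sets N = sets borel" and A: "A \<in> sets borel"
  shows "emeasure (add_measure M N) A = emeasure M A + emeasure N A"
  unfolding add_measure_def
proof (rule emeasure_measure_of_sigma[OF _ _ _ A])
  show "sigma_algebra UNIV (sets (borel :: real measure))"
    using sets.sigma_algebra_axioms[of "borel :: real measure"] by simp
  show "positive (sets borel) (\<lambda>A. emeasure M A + emeasure N A)"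
    by (simp add: positive_def)
  show "countably_additive (sets borel) (\<lambda>A. emeasure M A + emeasure N A)"
    unfolding countably_additive_def
  proof (intro allI impI)
    fix A :: "nat \<Rightarrow> real set" assume "range A \<subseteq> sets borel" "disjoint_family A"
    then show "(\<Sum>i. emeasure M (A i) + emeasure N (A i)) = emeasure M (\<Union>i. A i) + emeasure N (\<Union>i. A i)"
      using M N by (simp add: suminf_add[symmetric] suminf_emeasure)
  qed
qed

lemma nn_integral_add_measure:
  fixes f :: "real \<Rightarrow> ennreal"
  assumes M: "sets M = sets borel" and N: "sets N = sets borel" and f: "f \<in> borel_measurable borel"
  shows "(\<integral>\<^sup>+x. f x \<partial>add_measure M N) = (\<integral>\<^sup>+x. f x \<partial>M) + (\<integral>\<^sup>+x. f x \<partial>N)"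
  using f
proof (induct rule: borel_measurable_induct)
  case (cong f g)
  then show ?case by (simp cong: nn_integral_cong)
next
  case (set A)
  then show ?case using emeasure_add_measure[OF M N set] M N by simp
next
  case (mult u c)
  have "u \<in> borel_measurable M" "u \<in> borel_measurable N" "u \<in> borel_measurable (add_measure M N)"
    using borel_measurable_sets_borel[OF _ mult(2)] M N by auto
  then show ?case using mult(4) by (simp add: nn_integral_cmult distrib_left)
next
  case (add u v)
  have "u \<in> borel_measurable M" "u \<in> borel_measurable N" "u \<in> borel_measurable (add_measure M N)"
    "v \<in> borel_measurable M" "v \<in> borel_measurable N" "v \<in> borel_measurable (add_measure M N)"
    using borel_measurable_sets_borel[OF _ add(1)] borel_measurable_sets_borel[OF _ add(4)] M N by auto
  then show ?case using add(3,7) by (simp add: nn_integral_add ac_simps)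
next
  case (seq U)
  have meas: "U i \<in> borel_measurable K" if "sets K = sets borel" for K i
    using borel_measurable_sets_borel[OF that seq(1)] .
  have inc: "incseq (\<lambda>i. \<integral>\<^sup>+x. U i x \<partial>K)" for K
    using seq(4) unfolding incseq_def by (auto intro!: nn_integral_mono simp: le_fun_def)
  have conv: "(\<integral>\<^sup>+x. (SUP i. U i) x \<partial>K) = (SUP i. \<integral>\<^sup>+x. U i x \<partial>K)" if "sets K = sets borel" for K
    unfolding SUP_apply using nn_integral_monotone_convergence_SUP[OF seq(4) meas[OF that]] .
  show ?case
    unfolding conv[OF M] conv[OF N] conv[OF sets_add_measure]
    by (simp add: ennreal_SUP_add[OF inc inc, symmetric] seq(3))
qed

lemma integral_add_measure:
  fixes f :: "real \<Rightarrow> real"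
  assumes M: "sets M = sets borel" and N: "sets N = sets borel" and f: "f \<in> borel_measurable borel"
    and iM: "integrable M f" and iN: "integrable N f"
  shows "integrable (add_measure M N) f"
    and "integral\<^sup>L (add_measure M N) f = integral\<^sup>L M f + integral\<^sup>L N f"
proof -
  have nn: "(\<integral>\<^sup>+x. ennreal (g x) \<partial>add_measure M N) = (\<integral>\<^sup>+x. ennreal (g x) \<partial>M) + (\<integral>\<^sup>+x. ennreal (g x) \<partial>N)"
    if "g \<in> borel_measurable borel" for g :: "real \<Rightarrow> real"
    using nn_integral_add_measure[OF M N] that by simp
  have fin: "(\<integral>\<^sup>+x. ennreal (f x) \<partial>K) \<noteq> \<infinity>" "(\<integral>\<^sup>+x. ennreal (- f x) \<partial>K) \<noteq> \<infinity>"
    if "integrable K f" for K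
    using that unfolding real_integrable_def by auto
  show int: "integrable (add_measure M N) f"
    unfolding real_integrable_def
    using borel_measurable_sets_borel[OF sets_add_measure f] f fin[OF iM] fin[OF iN] by (simp add: nn)
  show "integral\<^sup>L (add_measure M N) f = integral\<^sup>L M f + integral\<^sup>L N f"
    unfolding real_lebesgue_integral_def[OF int] real_lebesgue_integral_def[OF iM]
      real_lebesgue_integral_def[OF iN]
    using f fin[OF iM] fin[OF iN] by (simp add: nn enn2real_plus less_top)
qed

lemma finite_measure_add_measure:
  assumes "sets M = sets borel" "sets N = sets borel" "finite_measure M" "finite_measure N"
  shows "finite_measure (add_measure M N)"
proof (rule finite_measureI)
  have fin: "emeasure K UNIV \<noteq> \<infinity>" if "sets K = sets borel" "finite_measure K" for K
    using finite_measure.emeasure_finite[OF that(2), of "space K"] space_sets_borel[OF that(1)] by simp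
  show "emeasure (add_measure M N) (space (add_measure M N)) \<noteq> \<infinity>"
    using emeasure_add_measure[OF assms(1,2), of UNIV] fin[OF assms(1,3)] fin[OF assms(2,4)] by simp
qed

lemma measure_add_measure:
  assumes "sets M = sets borel" "sets N = sets borel" "finite_measure M" "finite_measure N"
    and "A \<in> sets borel"
  shows "measure (add_measure M N) A = measure M A + measure N A"
proof -
  have "emeasure (add_measure M N) A = ennreal (measure M A + measure N A)"
    using emeasure_add_measure[OF assms(1,2,5)] assms
    by (simp add: finite_measure.emeasure_eq_measure)
  then show ?thesis by (intro measure_eq_emeasure_eq_ennreal) simp_all
qed

lemma AE_in_interval:
  fixes M :: "real measure"
  assumes "sets M = sets borel" "emeasure M (- {a..b}) = 0"
  shows "AE x in M. x \<in> {a..b}"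
proof (rule AE_I'[of "- {a..b}"])
  show "- {a..b} \<in> null_sets M" using assms by (simp add: null_sets_def)
qed auto

lemma integrable_bounded_on_interval:
  fixes M :: "real measure" and f :: "real \<Rightarrow> real"
  assumes "sets M = sets borel" "finite_measure M" "emeasure M (- {a..b}) = 0"
    and "f \<in> borel_measurable borel" "\<forall>x\<in>{a..b}. \<bar>f x\<bar> \<le> C"
  shows "integrable M f"
proof -
  interpret finite_measure M by fact
  show ?thesis
  proof (rule integrable_const_bound[of _ C])
    show "AE x in M. norm (f x) \<le> C"
      using AE_in_interval[OF assms(1,3)] assms(5) by (auto elim!: AE_mp)
    show "f \<in> borel_measurable M" using borel_measurable_sets_borel assms by blast
  qed
qed

text \<open>Two representations describe the same signed measure on \<open>B\<close> iff the cross sums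
  \<open>M1 + N2\<close> and \<open>N1 + M2\<close> agree on \<open>B\<close>; this reduces statements about signed measures to
  statements about ordinary measures.\<close>

lemma signed_rep_cross_sum_iff:
  assumes r: "signed_rep a b s M1 M2" and r': "signed_rep a' b' s' N1 N2" and B: "B \<in> sets borel"
  shows "emeasure (add_measure M1 N2) B = emeasure (add_measure N1 M2) B \<longleftrightarrow> s B = s' B"
proof -
  have fin: "sets M1 = sets borel" "sets M2 = sets borel" "sets N1 = sets borel" "sets N2 = sets borel"
    "finite_measure M1" "finite_measure M2" "finite_measure N1" "finite_measure N2"
    using r r' unfolding signed_rep_def by auto
  have "emeasure (add_measure K L) B = ennreal (measure K B + measure L B)"
    if "sets K = sets borel" "sets L = sets borel" "finite_measure K" "finite_measure L" for K L
    using emeasure_add_measure[OF that(1,2) B] that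
    by (simp add: finite_measure.emeasure_eq_measure ennreal_plus)
  then have "emeasure (add_measure M1 N2) B = emeasure (add_measure N1 M2) B \<longleftrightarrow>
      measure M1 B + measure N2 B = measure N1 B + measure M2 B"
    using fin by (simp del: ennreal_plus)
  then show ?thesis using r r' B unfolding signed_rep_def by auto
qed

lemma signed_rep_integral_eq:
  fixes f :: "real \<Rightarrow> real"
  assumes r: "signed_rep a b s M1 M2" and r': "signed_rep a b s N1 N2"
    and f: "f \<in> borel_measurable borel" "\<forall>x\<in>{a..b}. \<bar>f x\<bar> \<le> C"
  shows "integral\<^sup>L M1 f - integral\<^sup>L M2 f = integral\<^sup>L N1 f - integral\<^sup>L N2 f"
proof -
  have sets: "sets M1 = sets borel" "sets M2 = sets borel" "sets N1 = sets borel" "sets N2 = sets borel"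
    using r r' unfolding signed_rep_def by auto
  have int: "integrable M1 f" "integrable M2 f" "integrable N1 f" "integrable N2 f"
    using r r' integrable_bounded_on_interval[OF _ _ _ f] unfolding signed_rep_def by auto
  have "add_measure M1 N2 = add_measure N1 M2"
    by (rule measure_eqI) (simp_all add: signed_rep_cross_sum_iff[OF r r'])
  then have "integral\<^sup>L M1 f + integral\<^sup>L N2 f = integral\<^sup>L N1 f + integral\<^sup>L M2 f"
    using integral_add_measure(2)[OF sets(1,4) f(1) int(1,4)]
      integral_add_measure(2)[OF sets(3,2) f(1) int(3,2)] by simp
  then show ?thesis by simp
qed

lemma signed_integral_rep:
  fixes f :: "real \<Rightarrow> real"
  assumes r: "signed_rep a b s M1 M2"
    and f: "f \<in> borel_measurable borel" "\<forall>x\<in>{a..b}. \<bar>f x\<bar> \<le> C"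
  shows "signed_integral a b s f = integral\<^sup>L M1 f - integral\<^sup>L M2 f"
proof -
  define P where "P = (SOME P. signed_rep a b s (fst P) (snd P))"
  have "signed_rep a b s (fst P) (snd P)"
    unfolding P_def by (rule someI_ex) (use r in auto)
  then show ?thesis
    unfolding signed_integral_def Let_def P_def[symmetric] by (rule signed_rep_integral_eq[OF _ r f])
qed

lemma signed_rep_cong:
  "\<forall>B\<in>sets borel. s B = s' B \<Longrightarrow> signed_rep a b s = signed_rep a b s'"
  unfolding signed_rep_def by (intro ext) auto

lemma signed_integral_cong:
  "\<forall>B\<in>sets borel. s B = s' B \<Longrightarrow> signed_integral a b s f = signed_integral a b s' f"
  unfolding signed_integral_def using signed_rep_cong by metis

lemma signed_rep_concentrated:
  assumes r: "signed_rep a b s M1 M2" and B: "B \<in> sets borel"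
  shows "s B = s (B \<inter> {a..b})"
proof -
  have "measure M B = measure M (B \<inter> {a..b})"
    if "sets M = sets borel" "emeasure M (- {a..b}) = 0" for M
    by (rule measure_eq_AE) (use AE_in_interval[OF that] B that in \<open>auto elim!: AE_mp\<close>)
  then show ?thesis using r B unfolding signed_rep_def by auto
qed

lemma signed_rep_image:
  assumes r: "signed_rep a b s M1 M2" and \<phi>: "\<phi> \<in> borel_measurable borel"
    and maps: "\<forall>x\<in>{a..b}. \<phi> x \<in> {a'..b'}"
  shows "signed_rep a' b' (\<lambda>B. s (\<phi> -` B)) (distr M1 borel \<phi>) (distr M2 borel \<phi>)"
proof -
  have rep: "sets M1 = sets borel" "sets M2 = sets borel"
    "emeasure M1 (- {a..b}) = 0" "emeasure M2 (- {a..b}) = 0" "finite_measure M1" "finite_measure M2"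
    "\<forall>B\<in>sets borel. s B = measure M1 B - measure M2 B"
    using r unfolding signed_rep_def by auto
  have \<phi>M: "\<phi> \<in> measurable M borel" if "sets M = sets borel" for M
    using borel_measurable_sets_borel[OF that \<phi>] .
  have null: "emeasure (distr M borel \<phi>) (- {a'..b'}) = 0"
    if "sets M = sets borel" "emeasure M (- {a..b}) = 0" for M
  proof -
    have "emeasure (distr M borel \<phi>) (- {a'..b'}) = emeasure M (\<phi> -` (- {a'..b'}))"
      using emeasure_distr[OF \<phi>M[OF that(1)], of "- {a'..b'}"] space_sets_borel[OF that(1)] by simp
    also have "\<dots> \<le> emeasure M (- {a..b})"
      by (rule emeasure_mono) (use maps that in auto)
    finally show ?thesis using that by simp
  qed
  show ?thesis unfolding signed_rep_def
  proof (intro conjI ballI)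
    show "finite_measure (distr M1 borel \<phi>)" "finite_measure (distr M2 borel \<phi>)"
      using finite_measure.finite_measure_distr[OF rep(5) \<phi>M[OF rep(1)]]
        finite_measure.finite_measure_distr[OF rep(6) \<phi>M[OF rep(2)]] by auto
    fix B :: "real set" assume B: "B \<in> sets borel"
    have "\<phi> -` B \<in> sets borel" using measurable_sets[OF \<phi> B] by simp
    then show "s (\<phi> -` B) = measure (distr M1 borel \<phi>) B - measure (distr M2 borel \<phi>) B"
      using rep(7) B measure_distr[OF \<phi>M[OF rep(1)] B] measure_distr[OF \<phi>M[OF rep(2)] B]
        space_sets_borel[OF rep(1)] space_sets_borel[OF rep(2)] by simp
  qed (use null rep in auto)
qed

lemma signed_borel_measure_image:
  assumes "signed_borel_measure a b s" "\<phi> \<in> borel_measurable borel" "\<forall>x\<in>{a..b}. \<phi> x \<in> {a'..b'}"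
  shows "signed_borel_measure a' b' (\<lambda>B. s (\<phi> -` B))"
  using signed_rep_image[OF _ assms(2,3)] assms(1) unfolding signed_borel_measure_def by blast

lemma signed_integral_image:
  fixes f :: "real \<Rightarrow> real"
  assumes r: "signed_borel_measure a b s" and \<phi>: "\<phi> \<in> borel_measurable borel"
    and maps: "\<forall>x\<in>{a..b}. \<phi> x \<in> {a'..b'}"
    and f: "f \<in> borel_measurable borel" "\<forall>x\<in>{a'..b'}. \<bar>f x\<bar> \<le> C"
  shows "signed_integral a' b' (\<lambda>B. s (\<phi> -` B)) f = signed_integral a b s (\<lambda>x. f (\<phi> x))"
proof -
  obtain M1 M2 where r: "signed_rep a b s M1 M2"
    using r unfolding signed_borel_measure_def by blast
  have \<phi>M: "\<phi> \<in> measurable M borel" if "sets M = sets borel" for M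
    using borel_measurable_sets_borel[OF that \<phi>] .
  have sets: "sets M1 = sets borel" "sets M2 = sets borel" using r unfolding signed_rep_def by auto
  have "signed_integral a' b' (\<lambda>B. s (\<phi> -` B)) f
      = integral\<^sup>L (distr M1 borel \<phi>) f - integral\<^sup>L (distr M2 borel \<phi>) f"
    by (rule signed_integral_rep[OF signed_rep_image[OF r \<phi> maps] f])
  also have "\<dots> = integral\<^sup>L M1 (\<lambda>x. f (\<phi> x)) - integral\<^sup>L M2 (\<lambda>x. f (\<phi> x))"
    using integral_distr[OF \<phi>M[OF sets(1)] f(1)] integral_distr[OF \<phi>M[OF sets(2)] f(1)] by simp
  also have "\<dots> = signed_integral a b s (\<lambda>x. f (\<phi> x))"
    by (rule signed_integral_rep[OF r, symmetric]) (use \<phi> f maps in auto)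
  finally show ?thesis .
qed

lemma power_bounded_on_interval: "\<forall>x\<in>{a..b::real}. \<bar>x ^ k\<bar> \<le> (\<bar>a\<bar> + \<bar>b\<bar>) ^ k"
proof
  fix x assume "x \<in> {a..b}"
  then have "\<bar>x\<bar> \<le> \<bar>a\<bar> + \<bar>b\<bar>" by auto
  then show "\<bar>x ^ k\<bar> \<le> (\<bar>a\<bar> + \<bar>b\<bar>) ^ k" by (simp add: power_abs power_mono)
qed

lemma signed_integral_cong_on_interval:
  fixes f g :: "real \<Rightarrow> real"
  assumes r: "signed_borel_measure a b s" and fg: "\<forall>x\<in>{a..b}. f x = g x"
    and f: "f \<in> borel_measurable borel" "\<forall>x\<in>{a..b}. \<bar>f x\<bar> \<le> C"
    and g: "g \<in> borel_measurable borel"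
  shows "signed_integral a b s f = signed_integral a b s g"
proof -
  obtain M1 M2 where r: "signed_rep a b s M1 M2"
    using r unfolding signed_borel_measure_def by blast
  have "integral\<^sup>L M f = integral\<^sup>L M g" if "sets M = sets borel" "emeasure M (- {a..b}) = 0" for M
    by (rule integral_cong_AE)
      (use borel_measurable_sets_borel[OF that(1)] f g AE_in_interval[OF that] fg in \<open>auto elim!: AE_mp\<close>)
  moreover have "\<forall>x\<in>{a..b}. \<bar>g x\<bar> \<le> C" using f fg by auto
  ultimately show ?thesis
    using signed_integral_rep[OF r f] signed_integral_rep[OF r g] r unfolding signed_rep_def by auto
qed

lemma signed_integral_uminus:
  fixes f :: "real \<Rightarrow> real"
  assumes r: "signed_borel_measure a b s"
    and f: "f \<in> borel_measurable borel" "\<forall>x\<in>{a..b}. \<bar>f x\<bar> \<le> C"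
  shows "signed_integral a b s (\<lambda>x. - f x) = - signed_integral a b s f"
proof -
  obtain M1 M2 where r: "signed_rep a b s M1 M2"
    using r unfolding signed_borel_measure_def by blast
  have f': "(\<lambda>x. - f x) \<in> borel_measurable borel" "\<forall>x\<in>{a..b}. \<bar>- f x\<bar> \<le> C" using f by auto
  show ?thesis unfolding signed_integral_rep[OF r f] signed_integral_rep[OF r f'] by simp
qed

lemma signed_integral_polynomial:
  assumes r: "signed_borel_measure a b s"
  shows "signed_integral a b s (\<lambda>x. \<Sum>j\<le>k. c j * x ^ j) = (\<Sum>j\<le>k. c j * signed_integral a b s (\<lambda>x. x ^ j))"
proof -
  obtain M1 M2 where r: "signed_rep a b s M1 M2"
    using r unfolding signed_borel_measure_def by blast
  have int: "integrable M1 (\<lambda>x. x ^ j)" "integrable M2 (\<lambda>x. x ^ j)" for j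
    using r integrable_bounded_on_interval[OF _ _ _ _ power_bounded_on_interval]
    unfolding signed_rep_def by auto
  have bound: "\<forall>x\<in>{a..b}. \<bar>\<Sum>j\<le>k. c j * x ^ j\<bar> \<le> (\<Sum>j\<le>k. \<bar>c j\<bar> * (\<bar>a\<bar> + \<bar>b\<bar>) ^ j)"
  proof
    fix x assume x: "x \<in> {a..b}"
    have "\<bar>\<Sum>j\<le>k. c j * x ^ j\<bar> \<le> (\<Sum>j\<le>k. \<bar>c j * x ^ j\<bar>)" by (rule sum_abs)
    also have "\<dots> \<le> (\<Sum>j\<le>k. \<bar>c j\<bar> * (\<bar>a\<bar> + \<bar>b\<bar>) ^ j)"
      using power_bounded_on_interval x by (intro sum_mono) (auto simp: abs_mult intro: mult_left_mono)
    finally show "\<bar>\<Sum>j\<le>k. c j * x ^ j\<bar> \<le> (\<Sum>j\<le>k. \<bar>c j\<bar> * (\<bar>a\<bar> + \<bar>b\<bar>) ^ j)" .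
  qed
  have "signed_integral a b s (\<lambda>x. \<Sum>j\<le>k. c j * x ^ j)
      = integral\<^sup>L M1 (\<lambda>x. \<Sum>j\<le>k. c j * x ^ j) - integral\<^sup>L M2 (\<lambda>x. \<Sum>j\<le>k. c j * x ^ j)"
    by (rule signed_integral_rep[OF r _ bound]) simp
  also have "\<dots> = (\<Sum>j\<le>k. c j * (integral\<^sup>L M1 (\<lambda>x. x ^ j) - integral\<^sup>L M2 (\<lambda>x. x ^ j)))"
    using int by (simp add: integral_sum sum_subtractf right_diff_distrib)
  also have "\<dots> = (\<Sum>j\<le>k. c j * signed_integral a b s (\<lambda>x. x ^ j))"
    by (simp add: signed_integral_rep[OF r _ power_bounded_on_interval])
  finally show ?thesis .
qed

definition avg_measure :: "real measure \<Rightarrow> real measure \<Rightarrow> real measure" where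
  "avg_measure M N = density (add_measure M N) (\<lambda>_. ennreal (1/2))"

lemma signed_rep_average:
  assumes r1: "signed_rep a b s1 M1 M2" and r2: "signed_rep a b s2 N1 N2"
  shows "signed_rep a b (\<lambda>B. (s1 B + s2 B) / 2) (avg_measure M1 N1) (avg_measure M2 N2)"
proof -
  have rep: "sets M1 = sets borel" "sets M2 = sets borel" "sets N1 = sets borel" "sets N2 = sets borel"
    "finite_measure M1" "finite_measure M2" "finite_measure N1" "finite_measure N2"
    "emeasure M1 (- {a..b}) = 0" "emeasure M2 (- {a..b}) = 0"
    "emeasure N1 (- {a..b}) = 0" "emeasure N2 (- {a..b}) = 0"
    using r1 r2 unfolding signed_rep_def by auto
  have emeasure_avg: "emeasure (avg_measure M N) A = ennreal (1/2) * (emeasure M A + emeasure N A)"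
    if "sets M = sets borel" "sets N = sets borel" "A \<in> sets borel" for M N and A :: "real set"
    unfolding avg_measure_def using that by (simp add: emeasure_density_const emeasure_add_measure)
  have measure_avg: "measure (avg_measure M N) A = (measure M A + measure N A) / 2"
    if "sets M = sets borel" "sets N = sets borel" "finite_measure M" "finite_measure N"
      "A \<in> sets borel" for M N and A :: "real set"
  proof -
    have "measure (avg_measure M N) A = enn2real (ennreal (1/2)) * measure (add_measure M N) A"
      unfolding avg_measure_def by (rule measure_density_const) (use that in simp_all)
    moreover have "enn2real (ennreal (1/2)) = 1/2" by (rule enn2real_ennreal) simp
    ultimately show ?thesis using that by (simp add: measure_add_measure)
  qed
  have finite_avg: "finite_measure (avg_measure M N)"
    if "sets M = sets borel" "sets N = sets borel" "finite_measure M" "finite_measure N" for M N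
  proof (rule finite_measureI)
    have "emeasure (add_measure M N) UNIV \<noteq> \<infinity>"
      using finite_measure.emeasure_finite[OF finite_measure_add_measure[OF that]] by simp
    then show "emeasure (avg_measure M N) (space (avg_measure M N)) \<noteq> \<infinity>"
      unfolding avg_measure_def by (simp add: emeasure_density_const ennreal_mult_eq_top_iff)
  qed
  show ?thesis unfolding signed_rep_def
  proof (intro conjI ballI)
    show "sets (avg_measure M1 N1) = sets borel" "sets (avg_measure M2 N2) = sets borel"
      by (simp_all add: avg_measure_def)
    show "finite_measure (avg_measure M1 N1)" "finite_measure (avg_measure M2 N2)"
      using finite_avg rep by auto
    show "emeasure (avg_measure M1 N1) (- {a..b}) = 0" "emeasure (avg_measure M2 N2) (- {a..b}) = 0"
      using emeasure_avg[of M1 N1 "- {a..b}"] emeasure_avg[of M2 N2 "- {a..b}"] rep by auto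
    fix B :: "real set" assume B: "B \<in> sets borel"
    show "(s1 B + s2 B) / 2 = measure (avg_measure M1 N1) B - measure (avg_measure M2 N2) B"
      using measure_avg[of M1 N1 B] measure_avg[of M2 N2 B] r1 r2 rep B
      unfolding signed_rep_def by (simp add: field_simps)
  qed
qed

lemma signed_integral_average:
  fixes f :: "real \<Rightarrow> real"
  assumes r1: "signed_borel_measure a b s1" and r2: "signed_borel_measure a b s2"
    and f: "f \<in> borel_measurable borel" "\<forall>x\<in>{a..b}. \<bar>f x\<bar> \<le> C"
  shows "signed_integral a b (\<lambda>B. (s1 B + s2 B) / 2) f
       = (signed_integral a b s1 f + signed_integral a b s2 f) / 2"
proof -
  obtain M1 M2 where r1: "signed_rep a b s1 M1 M2" using r1 unfolding signed_borel_measure_def by blast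
  obtain N1 N2 where r2: "signed_rep a b s2 N1 N2" using r2 unfolding signed_borel_measure_def by blast
  have integral_avg: "integral\<^sup>L (avg_measure M N) f = (integral\<^sup>L M f + integral\<^sup>L N f) / 2"
    if "sets M = sets borel" "finite_measure M" "emeasure M (- {a..b}) = 0"
      "sets N = sets borel" "finite_measure N" "emeasure N (- {a..b}) = 0" for M N
  proof -
    have "integral\<^sup>L (avg_measure M N) f = integral\<^sup>L (add_measure M N) (\<lambda>x. (1/2) *\<^sub>R f x)"
      unfolding avg_measure_def
      by (rule integral_density) (use borel_measurable_sets_borel[OF sets_add_measure f(1)] in auto)
    then show ?thesis
      using integral_add_measure(2)[OF that(1,4) f(1)] integrable_bounded_on_interval[OF _ _ _ f] that
      by simp
  qed
  show ?thesis
    using r1 r2 unfolding signed_integral_rep[OF signed_rep_average[OF r1 r2] f]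
      signed_integral_rep[OF r1 f] signed_integral_rep[OF r2 f] signed_rep_def
    by (simp add: integral_avg field_simps)
qed

text \<open>A signed measure on the real line is determined by its distribution function: the cross
  sums then agree on all half-lines \<open>(t, \<infinity>)\<close>, hence they are equal as measures.\<close>

lemma signed_rep_unique:
  assumes r: "signed_rep a b s M1 M2" and r': "signed_rep a b s' N1 N2"
    and eq: "\<And>t. s {..t} = s' {..t}"
  shows "\<forall>B\<in>sets borel. s B = s' B"
proof -
  have rep: "sets M1 = sets borel" "sets M2 = sets borel" "sets N1 = sets borel" "sets N2 = sets borel"
    "finite_measure M1" "finite_measure M2" "finite_measure N1" "finite_measure N2"
    using r r' unfolding signed_rep_def by auto
  have total: "t UNIV = t {..b}" if "signed_rep a b t K L" for t K L
    using signed_rep_concentrated[OF that, of UNIV] signed_rep_concentrated[OF that, of "{..b}"] by auto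
  have compl: "t {x<..} = t UNIV - t {..x}" if "signed_rep a b t K L" for t K L and x :: real
  proof -
    have "measure K {x<..} = measure K UNIV - measure K {..x}"
      if "sets K = sets borel" "finite_measure K" for K
      using finite_measure.finite_measure_compl[OF that(2), of "{..x}"] that(1) space_sets_borel[OF that(1)]
      by (simp add: Compl_eq_Diff_UNIV[symmetric] Compl_atMost)
    then show ?thesis using \<open>signed_rep a b t K L\<close> unfolding signed_rep_def by auto
  qed
  have "add_measure M1 N2 = add_measure N1 M2"
  proof (rule measure_eqI_lessThan)
    show "emeasure (add_measure M1 N2) {x<..} < \<infinity>" for x
      using finite_measure.emeasure_finite[OF finite_measure_add_measure[OF rep(1,4,5,8)]]
      by (simp add: less_top)
    show "emeasure (add_measure M1 N2) {x<..} = emeasure (add_measure N1 M2) {x<..}" for x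
      using compl[OF r, of x] compl[OF r', of x] total[OF r] total[OF r'] eq
      by (simp add: signed_rep_cross_sum_iff[OF r r'])
  qed simp_all
  then show ?thesis using signed_rep_cross_sum_iff[OF r r'] by auto
qed

text \<open>The spectral theorem is obtained by maximizing the quadratic form
  on the unit sphere of an invariant subspace; it yields positive definite square roots and
  hence the normalization used in the definition of canonical moments.\<close>

lemma symmetric_inner_swap:
  fixes A :: "real^'n^'n"
  assumes "transpose A = A"
  shows "x \<bullet> (A *v y) = (A *v x) \<bullet> y"
proof -
  have "x \<bullet> (A *v y) = (x v* A) \<bullet> y" by (simp add: dot_lmul_matrix)
  also have "x v* A = transpose A *v x" by simp
  finally show ?thesis using assms by simp
qed

lemma quadratic_form_continuous: "continuous_on S (\<lambda>x. x \<bullet> ((A::real^'n^'n) *v x))"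
  by (intro continuous_intros linear_continuous_on matrix_vector_mul_linear_gen linear_linear[THEN iffD1])

lemma nonneg_quadratic_linear_coeff_zero:
  fixes B Q :: real
  assumes "\<And>t. 0 \<le> 2*t*B + t^2*Q"
  shows "B = 0"
proof (rule ccontr)
  assume "B \<noteq> 0"
  define c where "c = \<bar>Q\<bar> + 1"
  have c: "c > 0" "Q < c" "-Q < c" unfolding c_def by auto
  have "0 \<le> 2*(-B/c)*B + (-B/c)^2*Q" by (rule assms)
  then have "0 \<le> (2*(-B/c)*B + (-B/c)^2*Q) * c^2" using c by simp
  also have "\<dots> = B^2 * (Q - 2*c)" using c by (simp add: field_simps power2_eq_square)
  finally have "0 \<le> B^2 * (Q - 2*c)" .
  moreover have "B^2 > 0" using \<open>B \<noteq> 0\<close> by simp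
  moreover have "Q - 2*c < 0" using c by simp
  ultimately show False by (simp add: mult_pos_neg zero_le_mult_iff)
qed

lemma rayleigh_maximizer_exists:
  fixes A :: "real^'n^'n"
  assumes V: "subspace V" "V \<noteq> {0}"
  obtains e where "e \<in> V" "norm e = 1" "\<And>x. x \<in> V \<Longrightarrow> x \<bullet> (A *v x) \<le> (e \<bullet> (A *v e)) * (x \<bullet> x)"
proof -
  obtain v where v: "v \<in> V" "v \<noteq> 0" using V subspace_0 by blast
  define S where "S = sphere 0 1 \<inter> V"
  have compact: "compact S" unfolding S_def
    using closed_subspace[OF V(1)] by (simp add: compact_Int_closed)
  have "v /\<^sub>R norm v \<in> S" unfolding S_def using v V(1) by (simp add: subspace_scale)
  then have nonempty: "S \<noteq> {}" by blast
  obtain e where eS: "e \<in> S" and emax: "\<And>y. y \<in> S \<Longrightarrow> y \<bullet> (A *v y) \<le> e \<bullet> (A *v e)"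
    using continuous_attains_sup[OF compact nonempty quadratic_form_continuous] by blast
  have "x \<bullet> (A *v x) \<le> (e \<bullet> (A *v e)) * (x \<bullet> x)" if "x \<in> V" for x
  proof (cases "x = 0")
    case False
    define u where "u = x /\<^sub>R norm x"
    have "u \<in> S" unfolding S_def u_def using that False V(1) by (simp add: subspace_scale)
    then have "u \<bullet> (A *v u) \<le> e \<bullet> (A *v e)" using emax by blast
    moreover have "u \<bullet> (A *v u) = (x \<bullet> (A *v x)) / (norm x)^2"
      unfolding u_def by (simp add: matrix_vector_mult_scaleR power2_eq_square divide_inverse)
    ultimately show ?thesis using False by (simp add: divide_le_eq power2_norm_eq_inner)
  qed simp
  moreover have "e \<in> V" "norm e = 1" using eS unfolding S_def by auto
  ultimately show ?thesis using that by blast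
qed

text \<open>For a symmetric \<open>A\<close> leaving \<open>V\<close> invariant, such a maximizer is an eigenvector:
  the first variation of the Rayleigh quotient vanishes in every direction of \<open>V\<close>.\<close>

lemma rayleigh_maximizer_eigenvector:
  fixes A :: "real^'n^'n"
  assumes sym: "transpose A = A" and V: "subspace V" "\<forall>x\<in>V. A *v x \<in> V"
    and e: "e \<in> V" "norm e = 1" and max: "\<And>x. x \<in> V \<Longrightarrow> x \<bullet> (A *v x) \<le> (e \<bullet> (A *v e)) * (x \<bullet> x)"
  shows "A *v e = (e \<bullet> (A *v e)) *\<^sub>R e"
proof -
  define l where "l = e \<bullet> (A *v e)"
  have ee: "e \<bullet> e = 1" using e(2) by (simp add: norm_eq_1)
  have first_variation: "w \<bullet> (A *v e) = l * (w \<bullet> e)" if w: "w \<in> V" for w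
  proof -
    have "0 \<le> 2*t*(l * (w \<bullet> e) - w \<bullet> (A *v e)) + t^2 * (l * (w \<bullet> w) - w \<bullet> (A *v w))" for t
    proof -
      have "e + t *\<^sub>R w \<in> V" using e w V(1) by (simp add: subspace_add subspace_scale)
      from max[OF this] have "(e + t *\<^sub>R w) \<bullet> (A *v (e + t *\<^sub>R w)) \<le> l * ((e + t *\<^sub>R w) \<bullet> (e + t *\<^sub>R w))"
        unfolding l_def .
      moreover have "e \<bullet> (A *v w) = w \<bullet> (A *v e)"
        using symmetric_inner_swap[OF sym, of e w] by (simp add: inner_commute)
      ultimately show ?thesis
        by (simp add: matrix_vector_right_distrib matrix_vector_mult_scaleR inner_add_left inner_add_right
            algebra_simps ee l_def power2_eq_square inner_commute)
    qed
    then show ?thesis using nonneg_quadratic_linear_coeff_zero by force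
  qed
  define w where "w = A *v e - l *\<^sub>R e"
  have "w \<in> V" unfolding w_def using V e by (simp add: subspace_diff subspace_scale)
  from first_variation[OF this] have "w \<bullet> w = 0" unfolding w_def by (simp add: inner_diff_right)
  then have "A *v e = l *\<^sub>R e" unfolding w_def by simp
  then show ?thesis unfolding l_def .
qed

lemma orthogonal_complement_invariant:
  fixes A :: "real^'n^'n"
  assumes sym: "transpose A = A" and V: "\<forall>x\<in>V. A *v x \<in> V" and e: "A *v e = l *\<^sub>R e"
  shows "\<forall>x\<in>{x \<in> V. e \<bullet> x = 0}. A *v x \<in> {x \<in> V. e \<bullet> x = 0}"
proof
  fix x assume "x \<in> {x \<in> V. e \<bullet> x = 0}"
  moreover have "e \<bullet> (A *v x) = (A *v e) \<bullet> x" by (rule symmetric_inner_swap[OF sym])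
  ultimately show "A *v x \<in> {x \<in> V. e \<bullet> x = 0}" using V e by simp
qed

text \<open>Induction on the dimension, splitting off one eigenvector and passing to
  its orthogonal complement within \<open>V\<close>.\<close>

lemma symmetric_invariant_subspace_eigenbasis:
  fixes A :: "real^'n^'n"
  assumes sym: "transpose A = A"
  shows "subspace V \<Longrightarrow> \<forall>x\<in>V. A *v x \<in> V \<Longrightarrow>
    \<exists>E. E \<subseteq> V \<and> pairwise orthogonal E \<and> (\<forall>e\<in>E. norm e = 1 \<and> A *v e = (e \<bullet> (A *v e)) *\<^sub>R e) \<and> span E = V"
proof (induction "dim V" arbitrary: V rule: less_induct)
  case less
  show ?case
  proof (cases "V = {0}")
    case True then show ?thesis by (intro exI[of _ "{}"]) auto
  next
    case False
    then obtain e where e: "e \<in> V" "norm e = 1"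
      and max: "\<And>x. x \<in> V \<Longrightarrow> x \<bullet> (A *v x) \<le> (e \<bullet> (A *v e)) * (x \<bullet> x)"
      using rayleigh_maximizer_exists[OF less.prems(1)] by metis
    have eig: "A *v e = (e \<bullet> (A *v e)) *\<^sub>R e"
      by (rule rayleigh_maximizer_eigenvector[OF sym less.prems e max])
    have ee: "e \<bullet> e = 1" using e(2) by (simp add: norm_eq_1)
    define V' where "V' = {x \<in> V. e \<bullet> x = 0}"
    have sV': "subspace V'" unfolding V'_def using less.prems(1)
      by (auto simp: subspace_def inner_add_right)
    have iV': "\<forall>x\<in>V'. A *v x \<in> V'"
      unfolding V'_def by (rule orthogonal_complement_invariant[OF sym less.prems(2) eig])
    have "V' \<subseteq> V" "e \<in> V - V'" unfolding V'_def using e(1) ee by auto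
    then have "V' \<subset> V" by blast
    then have "dim V' < dim V"
      using dim_psubset[of V' V] sV' less.prems(1) by (metis span_eq_iff)
    from less.hyps[OF this sV' iV'] obtain E' where E': "E' \<subseteq> V'" "pairwise orthogonal E'"
      "\<forall>e\<in>E'. norm e = 1 \<and> A *v e = (e \<bullet> (A *v e)) *\<^sub>R e" "span E' = V'" by blast
    have "V \<subseteq> span (insert e E')"
    proof
      fix x assume "x \<in> V"
      then have "x - (e \<bullet> x) *\<^sub>R e \<in> V'" unfolding V'_def using e(1) less.prems(1) ee
        by (simp add: subspace_diff subspace_scale inner_diff_right)
      then show "x \<in> span (insert e E')" using E'(4) span_breakdown_eq by blast
    qed
    moreover have "span (insert e E') \<subseteq> V"
      using E'(1) e(1) less.prems(1) unfolding V'_def by (intro span_minimal) auto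
    moreover have "pairwise orthogonal (insert e E')"
      using E'(1,2) unfolding V'_def pairwise_insert by (auto simp: orthogonal_def inner_commute)
    moreover have "insert e E' \<subseteq> V" using E'(1) e(1) unfolding V'_def by auto
    moreover have "\<forall>x\<in>insert e E'. norm x = 1 \<and> A *v x = (x \<bullet> (A *v x)) *\<^sub>R x"
      using E'(3) e(2) eig by auto
    ultimately show ?thesis by blast
  qed
qed

lemma orthonormal_coordinate:
  fixes E :: "(real^'n) set"
  assumes "finite E" "\<And>e e'. e\<in>E \<Longrightarrow> e'\<in>E \<Longrightarrow> e \<bullet> e' = (if e = e' then 1 else 0)" "e \<in> E"
  shows "e \<bullet> (\<Sum>e'\<in>E. c e' *\<^sub>R e') = c e"
proof -
  have "e \<bullet> (\<Sum>e'\<in>E. c e' *\<^sub>R e') = (\<Sum>e'\<in>E. c e' * (if e = e' then 1 else 0))"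
    unfolding inner_sum_right using assms by (intro sum.cong) simp_all
  also have "\<dots> = c e" using assms by (simp add: if_distrib sum.delta cong: if_cong)
  finally show ?thesis .
qed

lemma symmetric_orthonormal_eigenbasis:
  fixes A :: "real^'n^'n"
  assumes "transpose A = A"
  obtains E where "finite E" "\<And>e e'. e\<in>E \<Longrightarrow> e'\<in>E \<Longrightarrow> e \<bullet> e' = (if e = e' then 1 else 0)"
    "\<And>e. e\<in>E \<Longrightarrow> A *v e = (e \<bullet> (A *v e)) *\<^sub>R e" "\<And>x. x = (\<Sum>e\<in>E. (e \<bullet> x) *\<^sub>R e)"
proof -
  obtain E where E: "pairwise orthogonal E" "\<forall>e\<in>E. norm e = 1 \<and> A *v e = (e \<bullet> (A *v e)) *\<^sub>R e"
    "span E = UNIV"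
    using symmetric_invariant_subspace_eigenbasis[OF assms, of UNIV] by auto
  have fin: "finite E" using E(1) pairwise_orthogonal_imp_finite by blast
  have orth: "e \<bullet> e' = (if e = e' then 1 else 0)" if "e\<in>E" "e'\<in>E" for e e'
    using E(1,2) that by (auto simp: pairwise_def orthogonal_def norm_eq_1)
  have "x = (\<Sum>e\<in>E. (e \<bullet> x) *\<^sub>R e)" for x
  proof -
    obtain u where u: "x = (\<Sum>v\<in>E. u v *\<^sub>R v)" using E(3) span_finite[OF fin] by auto
    then have "e \<bullet> x = u e" if "e \<in> E" for e
      using orthonormal_coordinate[OF fin orth that] by simp
    then show ?thesis using u by (metis (no_types, lifting) sum.cong)
  qed
  then show ?thesis using that fin E orth by blast
qed

text \<open>Existence: \<open>S = \<Sum>e. sqrt \<lambda>\<^sub>e e e\<^sup>T\<close> over an orthonormal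
  eigenbasis of \<open>A\<close>.  Uniqueness: any positive definite square root acts on each eigenvector
  \<open>e\<close> of \<open>A\<close> (eigenvalue \<open>\<lambda>\<close>) as multiplication by \<open>sqrt \<lambda>\<close>.\<close>

definition outer_prod :: "real^'n \<Rightarrow> real^'n \<Rightarrow> real^'n^'n" where
  "outer_prod u v = (\<chi> i j. u$i * v$j)"

lemma outer_prod_mult: "outer_prod u v *v x = (v \<bullet> x) *\<^sub>R u"
  by (simp add: outer_prod_def matrix_vector_mult_def inner_vec_def vec_eq_iff sum_distrib_left mult_ac)

lemma matrix_vector_mult_sum_left: "(\<Sum>e\<in>E. f e) *v x = (\<Sum>e\<in>E. f e *v x)"
  for f :: "_ \<Rightarrow> real^'n^'m"
  by (induction E rule: infinite_finite_induct) (simp_all add: matrix_vector_mult_add_rdistrib)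

lemma matrix_vector_mult_sum_right: "M *v (\<Sum>e\<in>E. g e) = (\<Sum>e\<in>E. M *v g e)"
  for M :: "real^'n^'m"
  by (induction E rule: infinite_finite_induct) (simp_all add: matrix_vector_right_distrib)

lemma pd_mat_invertible:
  fixes S :: "real^'n^'n"
  assumes "pd_mat S"
  shows "invertible S"
proof -
  have "S *v x = 0 \<Longrightarrow> x = 0" for x using assms unfolding pd_mat_def by force
  then show ?thesis using invertible_left_inverse matrix_left_invertible_ker by metis
qed

lemma matrix_inv_props: "invertible S \<Longrightarrow> S ** matrix_inv S = mat 1 \<and> matrix_inv S ** S = mat 1"
  unfolding invertible_def matrix_inv_def by (rule someI_ex)

text \<open>A positive definite square root \<open>S\<close> of \<open>A\<close> acts on an eigenvector of \<open>A\<close> with eigenvalue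
  \<open>\<lambda> > 0\<close> as \<open>sqrt \<lambda>\<close>: otherwise \<open>S e - sqrt \<lambda> e\<close> would be an eigenvector of \<open>S\<close> for the negative
  eigenvalue \<open>-sqrt \<lambda>\<close>.\<close>

lemma pd_sqrt_on_eigenvector:
  fixes S A :: "real^'n^'n"
  assumes S: "pd_mat S" "S ** S = A" and e: "A *v e = l *\<^sub>R e" "l > 0"
  shows "S *v e = sqrt l *\<^sub>R e"
proof (rule ccontr)
  define r where "r = sqrt l"
  have r: "r > 0" "r * r = l" using e(2) unfolding r_def by (auto simp: real_sqrt_mult[symmetric])
  define y where "y = S *v e - r *\<^sub>R e"
  assume "S *v e \<noteq> sqrt l *\<^sub>R e"
  then have "y \<noteq> 0" unfolding y_def r_def by simp
  have "S *v (S *v e) = A *v e" using S(2) by (simp add: matrix_vector_mul_assoc)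
  then have "S *v y + r *\<^sub>R y = 0" unfolding y_def using r e(1)
    by (simp add: matrix_vector_mult_diff_distrib matrix_vector_mult_scaleR algebra_simps)
  then have "S *v y = - (r *\<^sub>R y)" by (simp add: eq_neg_iff_add_eq_0)
  then have "y \<bullet> (S *v y) = - r * (y \<bullet> y)" by simp
  moreover have "y \<bullet> (S *v y) > 0" using S(1) \<open>y \<noteq> 0\<close> unfolding pd_mat_def by auto
  moreover have "r * (y \<bullet> y) \<ge> 0" using r by simp
  ultimately show False by linarith
qed

lemma pd_symmetric_sqrt_exists:
  fixes A :: "real^'n^'n"
  assumes sym: "transpose A = A" and pd: "pd_mat A"
  obtains S where "transpose S = S" "pd_mat S" "S ** S = A"
proof -
  obtain E where fin: "finite E"
    and orth: "\<And>e e'. e\<in>E \<Longrightarrow> e'\<in>E \<Longrightarrow> e \<bullet> e' = (if e = e' then 1 else 0)"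
    and eig: "\<And>e. e\<in>E \<Longrightarrow> A *v e = (e \<bullet> (A *v e)) *\<^sub>R e" and exp: "\<And>x. x = (\<Sum>e\<in>E. (e \<bullet> x) *\<^sub>R e)"
    using symmetric_orthonormal_eigenbasis[OF sym] by blast
  define l where "l e = e \<bullet> (A *v e)" for e
  have lpos: "l e > 0" if "e \<in> E" for e
    using orth[OF that that] pd unfolding pd_mat_def l_def by (metis inner_zero_left zero_neq_one)
  have eig': "A *v e = l e *\<^sub>R e" if "e \<in> E" for e using eig[OF that] l_def by simp
  define S where "S = (\<Sum>e\<in>E. sqrt (l e) *\<^sub>R outer_prod e e)"
  have Sx: "S *v x = (\<Sum>e\<in>E. (sqrt (l e) * (e \<bullet> x)) *\<^sub>R e)" for x
    unfolding S_def matrix_vector_mult_sum_left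
    by (simp add: scaleR_matrix_vector_assoc[symmetric] outer_prod_mult)
  have quad: "x \<bullet> (S *v x) = (\<Sum>e\<in>E. sqrt (l e) * (e \<bullet> x)^2)" for x
    unfolding Sx inner_sum_right by (simp add: power2_eq_square inner_commute mult_ac)
  have "transpose S = S"
    unfolding S_def by (simp add: vec_eq_iff transpose_def outer_prod_def mult.commute)
  moreover have "pd_mat S" unfolding pd_mat_def
  proof (intro allI impI)
    fix x :: "real^'n" assume "x \<noteq> 0"
    have "\<exists>e\<in>E. e \<bullet> x \<noteq> 0"
    proof (rule ccontr)
      assume "\<not> ?thesis"
      then have "(\<Sum>e\<in>E. (e \<bullet> x) *\<^sub>R e) = 0" by simp
      then show False using exp[of x] \<open>x \<noteq> 0\<close> by simp
    qed
    then obtain e0 where e0: "e0 \<in> E" "e0 \<bullet> x \<noteq> 0" by blast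
    show "0 < x \<bullet> (S *v x)" unfolding quad
      by (rule sum_pos2[OF fin e0(1)]) (use lpos e0 in \<open>auto simp: less_imp_le\<close>)
  qed
  moreover have "(S ** S) *v x = A *v x" for x
  proof -
    have "(S ** S) *v x = S *v (S *v x)" by (simp add: matrix_vector_mul_assoc)
    also have "\<dots> = (\<Sum>e\<in>E. (sqrt (l e) * (sqrt (l e) * (e \<bullet> x))) *\<^sub>R e)"
      unfolding Sx[of "S *v x"] unfolding Sx by (simp add: orthonormal_coordinate[OF fin orth])
    also have "\<dots> = (\<Sum>e\<in>E. (l e * (e \<bullet> x)) *\<^sub>R e)"
      using lpos by (intro sum.cong) (simp_all add: mult.assoc[symmetric] less_imp_le)
    also have "\<dots> = A *v (\<Sum>e\<in>E. (e \<bullet> x) *\<^sub>R e)"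
      unfolding matrix_vector_mult_sum_right by (intro sum.cong) (simp_all add: matrix_vector_mult_scaleR eig')
    finally show ?thesis using exp[of x] by simp
  qed
  then have "S ** S = A" by (simp add: matrix_eq)
  ultimately show ?thesis using that by blast
qed

lemma pd_sqrt_unique:
  fixes A S S' :: "real^'n^'n"
  assumes sym: "transpose A = A" and pd: "pd_mat A"
    and S: "pd_mat S" "S ** S = A" and S': "pd_mat S'" "S' ** S' = A"
  shows "S' = S"
proof -
  obtain E where "finite E"
    and orth: "\<And>e e'. e\<in>E \<Longrightarrow> e'\<in>E \<Longrightarrow> e \<bullet> e' = (if e = e' then 1 else 0)"
    and eig: "\<And>e. e\<in>E \<Longrightarrow> A *v e = (e \<bullet> (A *v e)) *\<^sub>R e" and exp: "\<And>x. x = (\<Sum>e\<in>E. (e \<bullet> x) *\<^sub>R e)"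
    using symmetric_orthonormal_eigenbasis[OF sym] by blast
  define l where "l e = e \<bullet> (A *v e)" for e
  have lpos: "l e > 0" if "e \<in> E" for e
    using orth[OF that that] pd unfolding pd_mat_def l_def by (metis inner_zero_left zero_neq_one)
  have eig': "A *v e = l e *\<^sub>R e" if "e \<in> E" for e using eig[OF that] l_def by simp
  have on_basis: "S' *v e = S *v e" if "e \<in> E" for e
    using pd_sqrt_on_eigenvector[OF S eig'[OF that] lpos[OF that]]
      pd_sqrt_on_eigenvector[OF S' eig'[OF that] lpos[OF that]] by simp
  have "S' *v x = S *v x" for x
  proof -
    have "S' *v x = S' *v (\<Sum>e\<in>E. (e \<bullet> x) *\<^sub>R e)" using exp[of x] by simp
    also have "\<dots> = S *v (\<Sum>e\<in>E. (e \<bullet> x) *\<^sub>R e)"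
      unfolding matrix_vector_mult_sum_right
      by (intro sum.cong) (simp_all add: matrix_vector_mult_scaleR on_basis)
    finally show ?thesis using exp[of x] by simp
  qed
  then show ?thesis by (simp add: matrix_eq)
qed

lemma pd_symmetric_sqrt_exists_unique:
  fixes A :: "real^'n^'n"
  assumes "transpose A = A" "pd_mat A"
  shows "\<exists>!S. transpose S = S \<and> pd_mat S \<and> S ** S = A"
  using pd_symmetric_sqrt_exists[OF assms] pd_sqrt_unique[OF assms] by metis

lemma mat_sqrt_props:
  fixes A :: "real^'n^'n"
  assumes "transpose A = A" "pd_mat A"
  shows "transpose (mat_sqrt A) = mat_sqrt A \<and> pd_mat (mat_sqrt A) \<and> mat_sqrt A ** mat_sqrt A = A"
  unfolding mat_sqrt_def using theI'[OF pd_symmetric_sqrt_exists_unique[OF assms]] .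

lemma mat_sqrt_unique:
  fixes A :: "real^'n^'n"
  assumes "transpose A = A" "pd_mat A" "transpose S = S" "pd_mat S" "S ** S = A"
  shows "mat_sqrt A = S"
  unfolding mat_sqrt_def
  using the1_equality[OF pd_symmetric_sqrt_exists_unique[OF assms(1,2)]] assms(3-5) by blast

lemma transpose_add: "transpose (A + B) = transpose A + transpose (B::real^'n^'n)"
  by (simp add: transpose_def vec_eq_iff)

lemma transpose_diff: "transpose (A - B) = transpose A - transpose (B::real^'n^'n)"
  by (simp add: transpose_def vec_eq_iff)

lemma psd_mat_add: "psd_mat A \<Longrightarrow> psd_mat B \<Longrightarrow> psd_mat (A + B)"
  unfolding psd_mat_def by (simp add: matrix_vector_mult_add_rdistrib inner_add_right add_nonneg_nonneg)

lemma psd_mat_scale: "0 \<le> c \<Longrightarrow> psd_mat A \<Longrightarrow> psd_mat (c *\<^sub>R A)"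
  unfolding psd_mat_def by (simp add: scaleR_matrix_vector_assoc[symmetric])

lemma psd_mat_scale_iff: "c > 0 \<Longrightarrow> psd_mat (c *\<^sub>R M) \<longleftrightarrow> psd_mat M"
  unfolding psd_mat_def by (simp add: scaleR_matrix_vector_assoc[symmetric] zero_le_mult_iff)

lemma pd_mat_scale_iff: "c > 0 \<Longrightarrow> pd_mat (c *\<^sub>R M) \<longleftrightarrow> pd_mat M"
  unfolding pd_mat_def by (simp add: scaleR_matrix_vector_assoc[symmetric] zero_less_mult_iff)

lemma psd_mat_antisym:
  fixes M :: "real^'n^'n"
  assumes "transpose M = M" "psd_mat M" "psd_mat (- M)"
  shows "M = 0"
proof -
  have neg: "(- M) *v x = - (M *v x)" for x
    by (simp add: matrix_vector_mult_def vec_eq_iff sum_negf)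
  have quad: "x \<bullet> (M *v x) = 0" for x
    using assms(2,3) unfolding psd_mat_def by (metis neg inner_minus_right neg_0_le_iff_le order_antisym)
  have "y \<bullet> (M *v x) = 0" for x y
  proof -
    have "(x + y) \<bullet> (M *v (x + y)) = x \<bullet> (M *v x) + y \<bullet> (M *v y) + x \<bullet> (M *v y) + y \<bullet> (M *v x)"
      by (simp add: matrix_vector_right_distrib inner_add_left inner_add_right)
    moreover have "x \<bullet> (M *v y) = y \<bullet> (M *v x)"
      using symmetric_inner_swap[OF assms(1), of x y] by (simp add: inner_commute)
    ultimately show ?thesis using quad by simp
  qed
  then have "M *v x = 0" for x using inner_eq_zero_iff by blast
  then show ?thesis by (simp add: matrix_eq)
qed

lemma loewner_antisym:
  fixes A B :: "real^'n^'n"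
  assumes "transpose A = A" "transpose B = B" "loewner_le A B" "loewner_le B A"
  shows "A = B"
proof -
  have "transpose (B - A) = B - A" using assms by (simp add: transpose_diff)
  moreover have "- (B - A) = A - B" by simp
  ultimately have "B - A = 0" using psd_mat_antisym assms(3,4) unfolding loewner_le_def by metis
  then show ?thesis by simp
qed

lemma loewner_affine: "c > 0 \<Longrightarrow> loewner_le (c *\<^sub>R A + C) (c *\<^sub>R B + C) \<longleftrightarrow> loewner_le A B"
  unfolding loewner_le_def by (simp add: psd_mat_scale_iff scaleR_diff_right[symmetric])

lemma matrix_inv_unique:
  fixes M :: "real^'n^'n"
  assumes "invertible M" "M ** B = mat 1"
  shows "matrix_inv M = B"
proof -
  have "matrix_inv M = matrix_inv M ** (M ** B)" using assms(2) by simp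
  also have "\<dots> = B" using matrix_inv_props[OF assms(1)] by (simp add: matrix_mul_assoc)
  finally show ?thesis .
qed

lemma inverse_sqrt_normalizes:
  fixes D :: "real^'n^'n"
  assumes "transpose D = D" "pd_mat D"
  shows "matrix_inv (mat_sqrt D) ** D ** matrix_inv (mat_sqrt D) = mat 1"
proof -
  let ?S = "mat_sqrt D"
  have S: "pd_mat ?S" "?S ** ?S = D" using mat_sqrt_props[OF assms] by auto
  have inv: "?S ** matrix_inv ?S = mat 1" "matrix_inv ?S ** ?S = mat 1"
    using matrix_inv_props[OF pd_mat_invertible[OF S(1)]] by auto
  have "matrix_inv ?S ** D ** matrix_inv ?S = (matrix_inv ?S ** ?S) ** (?S ** matrix_inv ?S)"
    by (subst S(2)[symmetric]) (simp add: matrix_mul_assoc)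
  then show ?thesis using inv by simp
qed

lemma inverse_sqrt_normalization_scale:
  fixes D X :: "real^'n^'n"
  assumes c: "c > 0" and D: "transpose D = D" "pd_mat D"
  shows "matrix_inv (mat_sqrt (c *\<^sub>R D)) ** (c *\<^sub>R X) ** matrix_inv (mat_sqrt (c *\<^sub>R D))
       = matrix_inv (mat_sqrt D) ** X ** matrix_inv (mat_sqrt D)"
proof -
  let ?S = "mat_sqrt D" let ?r = "sqrt c"
  have r: "?r > 0" "?r * ?r = c" using c by auto
  have S: "transpose ?S = ?S" "pd_mat ?S" "?S ** ?S = D" using mat_sqrt_props[OF D] by auto
  have inv: "?S ** matrix_inv ?S = mat 1"
    using matrix_inv_props[OF pd_mat_invertible[OF S(2)]] by auto
  have sqrt_scale: "mat_sqrt (c *\<^sub>R D) = ?r *\<^sub>R ?S"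
  proof (rule mat_sqrt_unique)
    show "transpose (c *\<^sub>R D) = c *\<^sub>R D" "transpose (?r *\<^sub>R ?S) = ?r *\<^sub>R ?S"
      using D S by (simp_all add: transpose_scalar)
    show "pd_mat (c *\<^sub>R D)" "pd_mat (?r *\<^sub>R ?S)"
      using D S c r by (simp_all add: pd_mat_scale_iff)
    show "(?r *\<^sub>R ?S) ** (?r *\<^sub>R ?S) = c *\<^sub>R D"
      using S(3) r(2) by (simp add: matrix_scalar_ac scalar_matrix_assoc[symmetric])
  qed
  have inv_scale: "matrix_inv (?r *\<^sub>R ?S) = (1/?r) *\<^sub>R matrix_inv ?S"
  proof (rule matrix_inv_unique)
    show "invertible (?r *\<^sub>R ?S)" using pd_mat_invertible S(2) r(1) pd_mat_scale_iff by blast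
    show "(?r *\<^sub>R ?S) ** ((1/?r) *\<^sub>R matrix_inv ?S) = mat 1"
      using inv r(1) by (simp add: matrix_scalar_ac scalar_matrix_assoc[symmetric])
  qed
  show ?thesis unfolding sqrt_scale inv_scale using r
    by (simp add: matrix_scalar_ac scalar_matrix_assoc[symmetric])
qed

lemma matrix_measure_entry:
  "matrix_measure a b \<mu> \<Longrightarrow> signed_borel_measure a b (\<lambda>B. \<mu> B $ i $ j)"
  unfolding matrix_measure_def by auto

lemma matrix_measure_concentrated:
  assumes "matrix_measure a b \<mu>" "B \<in> sets borel"
  shows "\<mu> B = \<mu> (B \<inter> {a..b})"
proof -
  have "\<mu> B $ i $ j = \<mu> (B \<inter> {a..b}) $ i $ j" for i j
  proof -
    obtain M1 M2 where "signed_rep a b (\<lambda>B. \<mu> B $ i $ j) M1 M2"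
      using matrix_measure_entry[OF assms(1)] unfolding signed_borel_measure_def by blast
    from signed_rep_concentrated[OF this assms(2)] show ?thesis .
  qed
  then show ?thesis by (simp add: vec_eq_iff)
qed

lemma matrix_measure_empty:
  assumes "matrix_measure a b \<nu>"
  shows "\<nu> {} = 0"
proof -
  have "\<nu> {} $ i $ j = 0" for i j
  proof -
    obtain M1 M2 where "signed_rep a b (\<lambda>B. \<nu> B $ i $ j) M1 M2"
      using matrix_measure_entry[OF assms] unfolding signed_borel_measure_def by blast
    then show ?thesis unfolding signed_rep_def by auto
  qed
  then show ?thesis by (simp add: vec_eq_iff)
qed

lemma matrix_measure_unique:
  assumes "matrix_measure a b \<nu>" "matrix_measure a b \<nu>'" "\<And>t. \<nu> {..t} = \<nu>' {..t}"
  shows "\<forall>B\<in>sets borel. \<nu> B = \<nu>' B"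
proof
  fix B :: "real set" assume B: "B \<in> sets borel"
  have "\<nu> B $ i $ j = \<nu>' B $ i $ j" for i j
  proof -
    obtain M1 M2 where r: "signed_rep a b (\<lambda>B. \<nu> B $ i $ j) M1 M2"
      using matrix_measure_entry[OF assms(1)] unfolding signed_borel_measure_def by blast
    obtain N1 N2 where r': "signed_rep a b (\<lambda>B. \<nu>' B $ i $ j) N1 N2"
      using matrix_measure_entry[OF assms(2)] unfolding signed_borel_measure_def by blast
    show ?thesis using signed_rep_unique[OF r r'] assms(3) B by auto
  qed
  then show "\<nu> B = \<nu>' B" by (simp add: vec_eq_iff)
qed

lemma matrix_measure_image:
  assumes mm: "matrix_measure a b \<mu>" and \<phi>: "\<phi> \<in> borel_measurable borel"
    and maps: "\<forall>x\<in>{a..b}. \<phi> x \<in> {a'..b'}"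
  shows "matrix_measure a' b' (\<lambda>B. \<mu> (\<phi> -` B))"
  unfolding matrix_measure_def
proof (intro conjI allI ballI impI)
  fix i j show "signed_borel_measure a' b' (\<lambda>B. \<mu> (\<phi> -` B) $ i $ j)"
    using signed_borel_measure_image[OF matrix_measure_entry[OF mm] \<phi> maps] .
next
  fix B :: "real set" assume B: "B \<in> sets borel" "B \<subseteq> {a'..b'}"
  have pre: "\<phi> -` B \<in> sets borel" using measurable_sets[OF \<phi> B(1)] by simp
  then have "\<phi> -` B \<inter> {a..b} \<in> sets borel" by auto
  then show "transpose (\<mu> (\<phi> -` B)) = \<mu> (\<phi> -` B)" "psd_mat (\<mu> (\<phi> -` B))"
    using mm matrix_measure_concentrated[OF mm pre] unfolding matrix_measure_def by auto
next
  have pre: "\<phi> -` {a'..b'} \<in> sets borel" using measurable_sets[OF \<phi>, of "{a'..b'}"] by simp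
  have "\<phi> -` {a'..b'} \<inter> {a..b} = {a..b}" using maps by auto
  then show "\<mu> (\<phi> -` {a'..b'}) = mat 1"
    using matrix_measure_concentrated[OF mm pre] mm unfolding matrix_measure_def by simp
qed

lemma mat_moment_cong:
  "\<forall>B\<in>sets borel. \<mu> B = \<nu> B \<Longrightarrow> mat_moment a b \<mu> k = mat_moment a b \<nu> k"
  unfolding mat_moment_def by (simp add: vec_eq_iff, intro allI signed_integral_cong) auto

lemma mat_moment_symmetric:
  assumes mm: "matrix_measure a b \<mu>"
  shows "transpose (mat_moment a b \<mu> k) = mat_moment a b \<mu> k"
proof -
  have "\<mu> B $ i $ j = \<mu> B $ j $ i" if "B \<in> sets borel" for B i j
  proof -
    have "B \<inter> {a..b} \<in> sets borel" using that by auto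
    then have "transpose (\<mu> (B \<inter> {a..b})) = \<mu> (B \<inter> {a..b})"
      using mm unfolding matrix_measure_def by auto
    then show ?thesis
      using matrix_measure_concentrated[OF mm that] by (metis transpose_def vec_lambda_beta)
  qed
  then show ?thesis unfolding mat_moment_def transpose_def
    by (simp add: vec_eq_iff, intro allI signed_integral_cong) auto
qed

lemma mat_moment_image:
  assumes mm: "matrix_measure a b \<mu>" and \<phi>: "\<phi> \<in> borel_measurable borel"
    and maps: "\<forall>x\<in>{a..b}. \<phi> x \<in> {a'..b'}"
  shows "mat_moment a' b' (\<lambda>B. \<mu> (\<phi> -` B)) k
       = (\<chi> i j. signed_integral a b (\<lambda>B. \<mu> B $ i $ j) (\<lambda>x. (\<phi> x) ^ k))"
  unfolding mat_moment_def
  by (intro arg_cong[where f=vec_lambda] ext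
      signed_integral_image[OF matrix_measure_entry[OF mm] \<phi> maps _ power_bounded_on_interval]) simp

text \<open>Under an affine map \<open>x \<mapsto> \<alpha> x + \<beta>\<close> the \<open>k\<close>-th moment of the image is, by the binomial
  theorem, a triangular combination of the moments of order \<open>\<le> k\<close> with leading coefficient
  \<open>\<alpha>\<^sup>k\<close>.\<close>

definition affine_coeff :: "real \<Rightarrow> real \<Rightarrow> nat \<Rightarrow> nat \<Rightarrow> real" where
  "affine_coeff \<alpha> \<beta> k j = of_nat (k choose j) * \<alpha>^j * \<beta>^(k-j)"

lemma affine_coeff_diag [simp]: "affine_coeff \<alpha> \<beta> k k = \<alpha>^k"
  by (simp add: affine_coeff_def)

lemma mat_moment_affine_image:
  assumes mm: "matrix_measure a b \<mu>" and maps: "\<forall>x\<in>{a..b}. \<alpha> * x + \<beta> \<in> {a'..b'}"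
  shows "mat_moment a' b' (\<lambda>B. \<mu> ((\<lambda>x. \<alpha> * x + \<beta>) -` B)) k
      = (\<Sum>j\<le>k. affine_coeff \<alpha> \<beta> k j *\<^sub>R mat_moment a b \<mu> j)"
proof -
  have binomial: "(\<alpha> * x + \<beta>) ^ k = (\<Sum>j\<le>k. affine_coeff \<alpha> \<beta> k j * x ^ j)" for x
    unfolding binomial_ring affine_coeff_def by (intro sum.cong refl) (simp add: power_mult_distrib mult_ac)
  have \<phi>: "(\<lambda>x. \<alpha> * x + \<beta>) \<in> borel_measurable borel" by simp
  show ?thesis unfolding mat_moment_image[OF mm \<phi> maps] binomial
    by (simp add: vec_eq_iff signed_integral_polynomial[OF matrix_measure_entry[OF mm]] mat_moment_def)
qed

text \<open>Moment ranges and extreme moments.  Every attainable moment is symmetric, so the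
  Loewner order is antisymmetric on the moment range and the extreme moments are unique.\<close>

lemma moment_range_symmetric: "T \<in> moment_range a b \<mu> k \<Longrightarrow> transpose T = T"
  unfolding moment_range_def using mat_moment_symmetric by blast

lemma moment_range_cong:
  "\<forall>j<k. mat_moment a b \<mu> j = mat_moment a b \<nu> j \<Longrightarrow> moment_range a b \<mu> k = moment_range a b \<nu> k"
  unfolding moment_range_def by simp

lemma upper_moment_eq: "is_upper_moment a b \<mu> k T \<Longrightarrow> upper_moment a b \<mu> k = T"
  unfolding upper_moment_def is_upper_moment_def
  by (rule the_equality) (auto intro: loewner_antisym moment_range_symmetric)

lemma lower_moment_eq: "is_lower_moment a b \<mu> k T \<Longrightarrow> lower_moment a b \<mu> k = T"
  unfolding lower_moment_def is_lower_moment_def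
  by (rule the_equality) (auto intro: loewner_antisym moment_range_symmetric)

text \<open>Invariance principle: if a positive affine map \<open>T \<mapsto> c T + C\<close> carries the moment
  range of \<open>\<mu>\<close> at order \<open>k\<close> onto that of \<open>\<nu>\<close> at order \<open>k'\<close> and the moment of \<open>\<mu>\<close> onto the
  moment of \<open>\<nu>\<close>, then it carries the extreme moments \<open>T\<^sup>\<plusminus>\<close> onto each other and the
  canonical moments coincide (including the cases where they are undefined).\<close>

lemma canonical_moment_affine_range:
  fixes \<mu> \<nu> :: "real set \<Rightarrow> real^'n^'n"
  assumes range: "moment_range a' b' \<nu> k' = (\<lambda>T. c *\<^sub>R T + C) ` moment_range a b \<mu> k"
    and moment: "mat_moment a' b' \<nu> k' = c *\<^sub>R mat_moment a b \<mu> k + C" and c: "c > 0"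
  shows "canonical_moment a' b' \<nu> k' = canonical_moment a b \<mu> k"
proof -
  let ?f = "\<lambda>T. c *\<^sub>R T + C"
  have image_iff: "?f T \<in> ?f ` S \<longleftrightarrow> T \<in> S" for T S using c by auto
  have upper: "is_upper_moment a' b' \<nu> k' (?f T) \<longleftrightarrow> is_upper_moment a b \<mu> k T" for T
    unfolding is_upper_moment_def range image_iff using loewner_affine[OF c] by auto
  have lower: "is_lower_moment a' b' \<nu> k' (?f T) \<longleftrightarrow> is_lower_moment a b \<mu> k T" for T
    unfolding is_lower_moment_def range image_iff using loewner_affine[OF c] by auto
  have ex_upper: "(\<exists>T. is_upper_moment a' b' \<nu> k' T) \<longleftrightarrow> (\<exists>T. is_upper_moment a b \<mu> k T)"
    using upper unfolding is_upper_moment_def[of a' b' \<nu>] range by blast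
  have ex_lower: "(\<exists>T. is_lower_moment a' b' \<nu> k' T) \<longleftrightarrow> (\<exists>T. is_lower_moment a b \<mu> k T)"
    using lower unfolding is_lower_moment_def[of a' b' \<nu>] range by blast
  show ?thesis
  proof (cases "(\<exists>T. is_upper_moment a b \<mu> k T) \<and> (\<exists>T. is_lower_moment a b \<mu> k T)")
    case False
    then show ?thesis unfolding canonical_moment_def using ex_upper ex_lower by auto
  next
    case True
    then obtain U L where U: "is_upper_moment a b \<mu> k U" and L: "is_lower_moment a b \<mu> k L" by blast
    have U': "upper_moment a' b' \<nu> k' = ?f U" "upper_moment a b \<mu> k = U"
      using upper_moment_eq upper U by blast+
    have L': "lower_moment a' b' \<nu> k' = ?f L" "lower_moment a b \<mu> k = L"
      using lower_moment_eq lower L by blast+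
    have width: "?f U - ?f L = c *\<^sub>R (U - L)" by (simp add: scaleR_diff_right)
    have "transpose U = U" "transpose L = L"
      using U L moment_range_symmetric unfolding is_upper_moment_def is_lower_moment_def by blast+
    then have sym: "transpose (U - L) = U - L" by (simp add: transpose_diff)
    have position: "mat_moment a' b' \<nu> k' - ?f L = c *\<^sub>R (mat_moment a b \<mu> k - L)"
      unfolding moment by (simp add: scaleR_diff_right)
    show ?thesis
      unfolding canonical_moment_def U' L' width position Let_def
      using ex_upper ex_lower True pd_mat_scale_iff[OF c] inverse_sqrt_normalization_scale[OF c sym]
      by auto
  qed
qed

text \<open>If the moment range is symmetric about the moment \<open>T\<^sub>k\<close>, i.e. invariant under
  \<open>T \<mapsto> 2 T\<^sub>k - T\<close>, then \<open>T\<^sub>k\<close> is the midpoint of \<open>T\<^sub>k\<^sup>-\<close> and \<open>T\<^sub>k\<^sup>+\<close> and the canonical moment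
  (when defined) is \<open>I/2\<close>.\<close>

lemma canonical_moment_reflected_range:
  fixes \<mu> :: "real set \<Rightarrow> real^'n^'n"
  assumes range: "moment_range a b \<mu> k = (\<lambda>T. 2 *\<^sub>R mat_moment a b \<mu> k - T) ` moment_range a b \<mu> k"
    and defined: "canonical_moment a b \<mu> k \<noteq> None"
  shows "canonical_moment a b \<mu> k = Some ((1/2) *\<^sub>R mat 1)"
proof -
  let ?T = "mat_moment a b \<mu> k"
  have ex: "\<exists>T. is_upper_moment a b \<mu> k T" "\<exists>T. is_lower_moment a b \<mu> k T"
    and pd: "pd_mat (upper_moment a b \<mu> k - lower_moment a b \<mu> k)"
    using defined unfolding canonical_moment_def by (auto split: if_splits)
  then obtain L where L: "is_lower_moment a b \<mu> k L" by blast
  have U: "is_upper_moment a b \<mu> k (2 *\<^sub>R ?T - L)"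
    unfolding is_upper_moment_def
  proof
    show "2 *\<^sub>R ?T - L \<in> moment_range a b \<mu> k"
      using L unfolding is_lower_moment_def by (subst range) auto
    show "\<forall>T'\<in>moment_range a b \<mu> k. loewner_le T' (2 *\<^sub>R ?T - L)"
    proof
      fix T' assume "T' \<in> moment_range a b \<mu> k"
      then obtain T'' where "T'' \<in> moment_range a b \<mu> k" "T' = 2 *\<^sub>R ?T - T''"
        by (subst (asm) range) auto
      then show "loewner_le T' (2 *\<^sub>R ?T - L)"
        using L unfolding is_lower_moment_def loewner_le_def by auto
    qed
  qed
  define D where "D = upper_moment a b \<mu> k - lower_moment a b \<mu> k"
  have D: "D = 2 *\<^sub>R (?T - L)"
    unfolding D_def upper_moment_eq[OF U] lower_moment_eq[OF L] by (simp add: scaleR_diff_right scaleR_2)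
  have "transpose (2 *\<^sub>R ?T - L) = 2 *\<^sub>R ?T - L" "transpose L = L"
    using L U moment_range_symmetric unfolding is_upper_moment_def is_lower_moment_def by blast+
  then have sym: "transpose D = D"
    unfolding D_def upper_moment_eq[OF U] lower_moment_eq[OF L] by (simp only: transpose_diff)
  have "canonical_moment a b \<mu> k
      = Some (matrix_inv (mat_sqrt D) ** ((1/2) *\<^sub>R D) ** matrix_inv (mat_sqrt D))"
    unfolding canonical_moment_def Let_def using ex pd D lower_moment_eq[OF L] unfolding D_def by simp
  also have "\<dots> = Some ((1/2) *\<^sub>R (matrix_inv (mat_sqrt D) ** D ** matrix_inv (mat_sqrt D)))"
    by (simp add: matrix_scalar_ac scalar_matrix_assoc[symmetric])
  also have "\<dots> = Some ((1/2) *\<^sub>R mat 1)"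
    using inverse_sqrt_normalizes[OF sym pd[folded D_def]] by simp
  finally show ?thesis .
qed

lemma triangular_combination_eq_iff:
  fixes X Y :: "nat \<Rightarrow> 'a::real_vector"
  assumes diag: "\<And>j. c j j \<noteq> 0"
  shows "(\<forall>j<n. (\<Sum>i\<le>j. c j i *\<^sub>R X i) = (\<Sum>i\<le>j. c j i *\<^sub>R Y i)) \<longleftrightarrow> (\<forall>j<n. X j = Y j)"
proof
  assume eq: "\<forall>j<n. (\<Sum>i\<le>j. c j i *\<^sub>R X i) = (\<Sum>i\<le>j. c j i *\<^sub>R Y i)"
  show "\<forall>j<n. X j = Y j"
  proof (intro allI impI)
    fix j show "j < n \<Longrightarrow> X j = Y j"
    proof (induction j rule: less_induct)
      case (less j)
      have "(\<Sum>i<j. c j i *\<^sub>R X i) = (\<Sum>i<j. c j i *\<^sub>R Y i)" using less by (intro sum.cong) auto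
      then have "c j j *\<^sub>R X j = c j j *\<^sub>R Y j"
        using eq[rule_format, OF less.prems] by (simp add: lessThan_Suc_atMost[symmetric])
      then show ?case using diag by simp
    qed
  qed
qed simp

lemma affine_image_lower_moments_iff:
  assumes mm: "matrix_measure a b \<mu>" and mm': "matrix_measure a b \<mu>'" and \<alpha>: "\<alpha> \<noteq> 0"
    and maps: "\<forall>x\<in>{a..b}. \<alpha> * x + \<beta> \<in> {a'..b'}"
  shows "(\<forall>j<k. mat_moment a' b' (\<lambda>B. \<mu>' ((\<lambda>x. \<alpha> * x + \<beta>) -` B)) j
               = mat_moment a' b' (\<lambda>B. \<mu> ((\<lambda>x. \<alpha> * x + \<beta>) -` B)) j)
       \<longleftrightarrow> (\<forall>j<k. mat_moment a b \<mu>' j = mat_moment a b \<mu> j)"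
  unfolding mat_moment_affine_image[OF mm maps] mat_moment_affine_image[OF mm' maps]
  by (rule triangular_combination_eq_iff) (simp add: \<alpha>)

lemma affine_image_moment:
  assumes mm': "matrix_measure a b \<mu>'" and maps: "\<forall>x\<in>{a..b}. \<alpha> * x + \<beta> \<in> {a'..b'}"
    and lower: "\<forall>j<k. mat_moment a b \<mu>' j = mat_moment a b \<mu> j"
  shows "mat_moment a' b' (\<lambda>B. \<mu>' ((\<lambda>x. \<alpha> * x + \<beta>) -` B)) k
       = \<alpha>^k *\<^sub>R mat_moment a b \<mu>' k + (\<Sum>j<k. affine_coeff \<alpha> \<beta> k j *\<^sub>R mat_moment a b \<mu> j)"
proof -
  have "mat_moment a' b' (\<lambda>B. \<mu>' ((\<lambda>x. \<alpha> * x + \<beta>) -` B)) k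
      = (\<Sum>j<k. affine_coeff \<alpha> \<beta> k j *\<^sub>R mat_moment a b \<mu>' j) + \<alpha>^k *\<^sub>R mat_moment a b \<mu>' k"
    unfolding mat_moment_affine_image[OF mm' maps] lessThan_Suc_atMost[symmetric] by simp
  also have "(\<Sum>j<k. affine_coeff \<alpha> \<beta> k j *\<^sub>R mat_moment a b \<mu>' j)
           = (\<Sum>j<k. affine_coeff \<alpha> \<beta> k j *\<^sub>R mat_moment a b \<mu> j)"
    using lower by (intro sum.cong) auto
  finally show ?thesis by simp
qed

lemma moment_range_affine_image:
  assumes mm: "matrix_measure a b \<mu>" and \<alpha>: "\<alpha> \<noteq> 0"
    and maps: "\<forall>x\<in>{a..b}. \<alpha> * x + \<beta> \<in> {a'..b'}"
    and maps_back: "\<forall>y\<in>{a'..b'}. (y - \<beta>) / \<alpha> \<in> {a..b}"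
  shows "moment_range a' b' (\<lambda>B. \<mu> ((\<lambda>x. \<alpha> * x + \<beta>) -` B)) k
       = (\<lambda>T. \<alpha>^k *\<^sub>R T + (\<Sum>j<k. affine_coeff \<alpha> \<beta> k j *\<^sub>R mat_moment a b \<mu> j)) ` moment_range a b \<mu> k"
    (is "moment_range a' b' (?img \<mu>) k = ?f ` moment_range a b \<mu> k")
proof (intro equalityI subsetI)
  fix T assume "T \<in> ?f ` moment_range a b \<mu> k"
  then obtain \<mu>' where mm': "matrix_measure a b \<mu>'"
    and lower: "\<forall>j<k. mat_moment a b \<mu>' j = mat_moment a b \<mu> j"
    and T: "T = ?f (mat_moment a b \<mu>' k)"
    unfolding moment_range_def by auto
  have "matrix_measure a' b' (?img \<mu>')" by (rule matrix_measure_image[OF mm' _ maps]) simp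
  moreover have "\<forall>j<k. mat_moment a' b' (?img \<mu>') j = mat_moment a' b' (?img \<mu>) j"
    using affine_image_lower_moments_iff[OF mm mm' \<alpha> maps] lower by blast
  moreover have "mat_moment a' b' (?img \<mu>') k = T"
    using affine_image_moment[OF mm' maps lower] T by simp
  ultimately show "T \<in> moment_range a' b' (?img \<mu>) k" unfolding moment_range_def by blast
next
  fix T assume "T \<in> moment_range a' b' (?img \<mu>) k"
  then obtain \<nu> where \<nu>: "matrix_measure a' b' \<nu>"
    and lower\<nu>: "\<forall>j<k. mat_moment a' b' \<nu> j = mat_moment a' b' (?img \<mu>) j"
    and T: "T = mat_moment a' b' \<nu> k"
    unfolding moment_range_def by auto
  define \<mu>' where "\<mu>' = (\<lambda>B. \<nu> ((\<lambda>y. (y - \<beta>) / \<alpha>) -` B))"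
  have mm': "matrix_measure a b \<mu>'" unfolding \<mu>'_def by (rule matrix_measure_image[OF \<nu> _ maps_back]) simp
  have "(\<lambda>y. (y - \<beta>) / \<alpha>) -` ((\<lambda>x. \<alpha> * x + \<beta>) -` B) = B" for B using \<alpha> by auto
  then have inverse: "?img \<mu>' = \<nu>" unfolding \<mu>'_def by simp
  have lower: "\<forall>j<k. mat_moment a b \<mu>' j = mat_moment a b \<mu> j"
    using affine_image_lower_moments_iff[OF mm mm' \<alpha> maps] lower\<nu> inverse by simp
  then have "mat_moment a b \<mu>' k \<in> moment_range a b \<mu> k" unfolding moment_range_def using mm' by auto
  moreover have "T = ?f (mat_moment a b \<mu>' k)"
    using affine_image_moment[OF mm' maps lower] inverse T by simp
  ultimately show "T \<in> ?f ` moment_range a b \<mu> k" by blast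
qed

lemma canonical_moment_unit_interval_image:
  fixes \<mu> :: "real set \<Rightarrow> real^'p^'p"
  assumes mm: "matrix_measure 0 1 \<mu>" and ab: "a < b"
  shows "canonical_moment a b (\<lambda>B. \<mu> ((\<lambda>x. (b - a) * x + a) -` B)) n = canonical_moment 0 1 \<mu> n"
proof (rule canonical_moment_affine_range)
  have maps: "\<forall>x\<in>{0..1}. (b - a) * x + a \<in> {a..b}"
  proof
    fix x :: real assume "x \<in> {0..1}"
    then have "0 \<le> (b - a) * x" "(b - a) * x \<le> b - a" using ab by (auto simp: mult_left_le)
    then show "(b - a) * x + a \<in> {a..b}" by auto
  qed
  have maps_back: "\<forall>y\<in>{a..b}. (y - a) / (b - a) \<in> {0..1}"
    using ab by (auto simp: divide_le_eq_1)
  show "moment_range a b (\<lambda>B. \<mu> ((\<lambda>x. (b - a) * x + a) -` B)) n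
      = (\<lambda>T. (b - a)^n *\<^sub>R T + (\<Sum>j<n. affine_coeff (b - a) a n j *\<^sub>R mat_moment 0 1 \<mu> j))
          ` moment_range 0 1 \<mu> n"
    by (rule moment_range_affine_image[OF mm _ maps maps_back]) (use ab in simp)
  show "mat_moment a b (\<lambda>B. \<mu> ((\<lambda>x. (b - a) * x + a) -` B)) n
      = (b - a)^n *\<^sub>R mat_moment 0 1 \<mu> n + (\<Sum>j<n. affine_coeff (b - a) a n j *\<^sub>R mat_moment 0 1 \<mu> j)"
    by (rule affine_image_moment[OF mm maps]) simp
  show "0 < (b - a)^n" using ab by simp
qed

text \<open>Part (b): for a measure invariant under the reflection \<open>x \<mapsto> a + b - x\<close> and odd \<open>k\<close>, the
  reflection maps the moment range onto itself by \<open>T \<mapsto> C - T\<close> and fixes \<open>T\<^sub>k\<close>, so \<open>C = 2 T\<^sub>k\<close>.\<close>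

lemma canonical_moment_odd_reflection_symmetric:
  fixes \<mu> :: "real set \<Rightarrow> real^'p^'p"
  assumes mm: "matrix_measure a b \<mu>"
    and sym: "\<forall>B \<in> sets borel. \<mu> B = \<mu> ((\<lambda>x. a + b - x) -` B)"
    and odd: "odd k" and defined: "canonical_moment a b \<mu> k \<noteq> None"
  shows "canonical_moment a b \<mu> k = Some ((1/2) *\<^sub>R mat 1)"
proof (rule canonical_moment_reflected_range[OF _ defined])
  let ?T = "mat_moment a b \<mu>" and ?C = "\<Sum>j<k. affine_coeff (-1) (a + b) k j *\<^sub>R mat_moment a b \<mu> j"
  have reflection: "(\<lambda>x::real. a + b - x) = (\<lambda>x. (-1) * x + (a + b))" by auto
  have maps: "\<forall>x\<in>{a..b}. (-1) * x + (a + b) \<in> {a..b}"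
    and maps_back: "\<forall>y\<in>{a..b}. (y - (a + b)) / (-1) \<in> {a..b}" by auto
  have invariant: "mat_moment a b (\<lambda>B. \<mu> ((\<lambda>x. (-1) * x + (a + b)) -` B)) j = ?T j" for j
    using mat_moment_cong[of "\<lambda>B. \<mu> ((\<lambda>x. (-1) * x + (a + b)) -` B)" \<mu>] sym unfolding reflection by simp
  have "moment_range a b \<mu> k = moment_range a b (\<lambda>B. \<mu> ((\<lambda>x. (-1) * x + (a + b)) -` B)) k"
    using invariant by (intro moment_range_cong) simp
  also have "\<dots> = (\<lambda>T. - T + ?C) ` moment_range a b \<mu> k"
    using moment_range_affine_image[OF mm _ maps maps_back, of k] odd by simp
  finally have range: "moment_range a b \<mu> k = (\<lambda>T. - T + ?C) ` moment_range a b \<mu> k" .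
  have "?T k = - ?T k + ?C"
    using affine_image_moment[OF mm maps, of k \<mu>] invariant[of k] odd by simp
  then have "?C = 2 *\<^sub>R ?T k" by (simp add: scaleR_2 algebra_simps)
  then show "moment_range a b \<mu> k = (\<lambda>T. 2 *\<^sub>R ?T k - T) ` moment_range a b \<mu> k"
    using range by simp
qed

lemma square_maps: "\<forall>x\<in>{-1..1::real}. x^2 \<in> {0..1}"
  by (auto simp: abs_square_le_1)

lemma matrix_measure_square_image:
  assumes "matrix_measure (-1) 1 \<sigma>"
  shows "matrix_measure 0 1 (\<lambda>B. \<sigma> ((\<lambda>x. x^2) -` B))"
proof -
  have "(\<lambda>x::real. x^2) \<in> borel_measurable borel" by simp
  then show ?thesis by (rule matrix_measure_image[OF assms _ square_maps])
qed

lemma mat_moment_square_image: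
  assumes "matrix_measure (-1) 1 \<sigma>"
  shows "mat_moment 0 1 (\<lambda>B. \<sigma> ((\<lambda>x. x^2) -` B)) j = mat_moment (-1) 1 \<sigma> (2 * j)"
proof -
  have sq: "(\<lambda>x::real. x^2) \<in> borel_measurable borel" by simp
  have "mat_moment 0 1 (\<lambda>B. \<sigma> ((\<lambda>x. x^2) -` B)) j
      = (\<chi> i k. signed_integral (-1) 1 (\<lambda>B. \<sigma> B $ i $ k) (\<lambda>x. (x^2)^j))"
    by (rule mat_moment_image[OF assms sq square_maps])
  also have "\<dots> = mat_moment (-1) 1 \<sigma> (2 * j)" unfolding mat_moment_def by (simp add: power_mult)
  finally show ?thesis .
qed

text \<open>Conversely, a measure on \<open>[0, 1]\<close> lifts to the symmetric measure on \<open>[-1, 1]\<close> that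
  distributes the mass at \<open>y\<close> equally over \<open>\<plusminus>sqrt y\<close>; its even moments are those of the original
  measure and its odd moments vanish.\<close>

definition symmetrization :: "(real set \<Rightarrow> real^'p^'p) \<Rightarrow> real set \<Rightarrow> real^'p^'p" where
  "symmetrization \<mu> B = (1/2) *\<^sub>R (\<mu> (sqrt -` B) + \<mu> ((\<lambda>y. - sqrt y) -` B))"

lemma sqrt_maps: "\<forall>y\<in>{0..1}. sqrt y \<in> {-1..1::real}" "\<forall>y\<in>{0..1}. - sqrt y \<in> {-1..1::real}"
proof -
  have "-1 \<le> sqrt y" if "0 \<le> y" for y :: real using real_sqrt_ge_zero[OF that] by linarith
  then show "\<forall>y\<in>{0..1}. sqrt y \<in> {-1..1::real}" "\<forall>y\<in>{0..1}. - sqrt y \<in> {-1..1::real}" by auto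
qed

lemma sqrt_measurable: "sqrt \<in> borel_measurable borel" "(\<lambda>y. - sqrt y) \<in> borel_measurable borel"
  by simp_all

lemma symmetrization_entry:
  "(\<lambda>B. symmetrization \<mu> B $ i $ j) = (\<lambda>B. (\<mu> (sqrt -` B) $ i $ j + \<mu> ((\<lambda>y. - sqrt y) -` B) $ i $ j) / 2)"
  by (simp add: symmetrization_def)

lemma matrix_measure_symmetrization:
  assumes mm: "matrix_measure 0 1 \<mu>"
  shows "matrix_measure (-1) 1 (symmetrization \<mu>)"
  unfolding matrix_measure_def
proof (intro conjI allI ballI impI)
  fix i j
  obtain M1 M2 where r: "signed_rep 0 1 (\<lambda>B. \<mu> B $ i $ j) M1 M2"
    using matrix_measure_entry[OF mm] unfolding signed_borel_measure_def by blast
  show "signed_borel_measure (-1) 1 (\<lambda>B. symmetrization \<mu> B $ i $ j)"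
    using signed_rep_average[OF signed_rep_image[OF r sqrt_measurable(1) sqrt_maps(1)]
        signed_rep_image[OF r sqrt_measurable(2) sqrt_maps(2)]]
    unfolding signed_borel_measure_def symmetrization_entry by blast
next
  fix B :: "real set" assume B: "B \<in> sets borel" "B \<subseteq> {-1..1}"
  have pre: "sqrt -` B \<in> sets borel" "(\<lambda>y. - sqrt y) -` B \<in> sets borel"
    using measurable_sets[OF sqrt_measurable(1) B(1)] measurable_sets[OF sqrt_measurable(2) B(1)] by simp_all
  have parts: "transpose (\<mu> (C \<inter> {0..1})) = \<mu> (C \<inter> {0..1}) \<and> psd_mat (\<mu> (C \<inter> {0..1}))"
    if "C \<in> sets borel" for C
    using mm that unfolding matrix_measure_def by auto
  have split: "symmetrization \<mu> B
      = (1/2) *\<^sub>R (\<mu> (sqrt -` B \<inter> {0..1}) + \<mu> ((\<lambda>y. - sqrt y) -` B \<inter> {0..1}))"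
    unfolding symmetrization_def
    using matrix_measure_concentrated[OF mm pre(1)] matrix_measure_concentrated[OF mm pre(2)] by simp
  show "transpose (symmetrization \<mu> B) = symmetrization \<mu> B"
    unfolding split using parts[OF pre(1)] parts[OF pre(2)] by (simp add: transpose_scalar transpose_add)
  show "psd_mat (symmetrization \<mu> B)"
    unfolding split using parts[OF pre(1)] parts[OF pre(2)] by (intro psd_mat_scale psd_mat_add) auto
next
  have pre: "sqrt -` {-1..1} \<in> sets borel" "(\<lambda>y. - sqrt y) -` {-1..1} \<in> sets borel"
    using measurable_sets[OF sqrt_measurable(1), of "{-1..1}"]
      measurable_sets[OF sqrt_measurable(2), of "{-1..1}"] by simp_all
  have "sqrt -` {-1..1} \<inter> {0..1} = {0..1::real}" "(\<lambda>y. - sqrt y) -` {-1..1} \<inter> {0..1} = {0..1::real}"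
    using sqrt_maps by auto
  moreover have "\<mu> {0..1} = mat 1" using mm unfolding matrix_measure_def by auto
  ultimately show "symmetrization \<mu> {-1..1} = mat 1"
    unfolding symmetrization_def
    using matrix_measure_concentrated[OF mm pre(1)] matrix_measure_concentrated[OF mm pre(2)]
    by (simp add: scaleR_2[symmetric])
qed

lemma mat_moment_symmetrization_entry:
  assumes mm: "matrix_measure 0 1 \<mu>"
  shows "mat_moment (-1) 1 (symmetrization \<mu>) k $ i $ j
     = (signed_integral 0 1 (\<lambda>B. \<mu> B $ i $ j) (\<lambda>y. sqrt y ^ k)
        + signed_integral 0 1 (\<lambda>B. \<mu> B $ i $ j) (\<lambda>y. (- sqrt y) ^ k)) / 2"
proof -
  have s: "signed_borel_measure 0 1 (\<lambda>B. \<mu> B $ i $ j)" using matrix_measure_entry[OF mm] .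
  have "mat_moment (-1) 1 (symmetrization \<mu>) k $ i $ j
      = (signed_integral (-1) 1 (\<lambda>B. \<mu> (sqrt -` B) $ i $ j) (\<lambda>x. x ^ k)
         + signed_integral (-1) 1 (\<lambda>B. \<mu> ((\<lambda>y. - sqrt y) -` B) $ i $ j) (\<lambda>x. x ^ k)) / 2"
    unfolding mat_moment_def vec_lambda_beta symmetrization_entry
    by (rule signed_integral_average[OF signed_borel_measure_image[OF s sqrt_measurable(1) sqrt_maps(1)]
          signed_borel_measure_image[OF s sqrt_measurable(2) sqrt_maps(2)] _ power_bounded_on_interval]) simp
  then show ?thesis
    using signed_integral_image[OF s sqrt_measurable(1) sqrt_maps(1) _ power_bounded_on_interval, of k]
      signed_integral_image[OF s sqrt_measurable(2) sqrt_maps(2) _ power_bounded_on_interval, of k]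
    by simp
qed

lemma mat_moment_symmetrization:
  assumes mm: "matrix_measure 0 1 \<mu>"
  shows "mat_moment (-1) 1 (symmetrization \<mu>) (2 * m) = mat_moment 0 1 \<mu> m"
    and "mat_moment (-1) 1 (symmetrization \<mu>) (Suc (2 * m)) = 0"
proof -
  have sqrt_bound: "\<forall>y\<in>{0..1::real}. \<bar>sqrt y ^ k\<bar> \<le> 1" for k
    by (auto simp: power_abs intro!: power_le_one)
  have "mat_moment (-1) 1 (symmetrization \<mu>) (2 * m) $ i $ j = mat_moment 0 1 \<mu> m $ i $ j" for i j
  proof -
    have s: "signed_borel_measure 0 1 (\<lambda>B. \<mu> B $ i $ j)" using matrix_measure_entry[OF mm] .
    have "signed_integral 0 1 (\<lambda>B. \<mu> B $ i $ j) (\<lambda>y. y ^ m)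
        = signed_integral 0 1 (\<lambda>B. \<mu> B $ i $ j) (\<lambda>y. (\<epsilon> * sqrt y) ^ (2 * m))" if "\<epsilon>\<^sup>2 = 1" for \<epsilon>
      by (rule signed_integral_cong_on_interval[OF s _ _ power_bounded_on_interval])
        (use that in \<open>auto simp: power_mult power_mult_distrib\<close>)
    from this[of 1] this[of "-1"] show ?thesis
      unfolding mat_moment_symmetrization_entry[OF mm] by (simp add: mat_moment_def)
  qed
  then show "mat_moment (-1) 1 (symmetrization \<mu>) (2 * m) = mat_moment 0 1 \<mu> m"
    by (simp add: vec_eq_iff)
  have "mat_moment (-1) 1 (symmetrization \<mu>) (Suc (2 * m)) $ i $ j = 0" for i j
  proof -
    have s: "signed_borel_measure 0 1 (\<lambda>B. \<mu> B $ i $ j)" using matrix_measure_entry[OF mm] .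
    have odd_power: "(\<lambda>y. (- sqrt y) ^ Suc (2 * m)) = (\<lambda>y. - (sqrt y ^ Suc (2 * m)))" by simp
    have "signed_integral 0 1 (\<lambda>B. \<mu> B $ i $ j) (\<lambda>y. (- sqrt y) ^ Suc (2 * m))
        = - signed_integral 0 1 (\<lambda>B. \<mu> B $ i $ j) (\<lambda>y. sqrt y ^ Suc (2 * m))"
      unfolding odd_power by (rule signed_integral_uminus[OF s _ sqrt_bound]) simp
    then show ?thesis unfolding mat_moment_symmetrization_entry[OF mm] by simp
  qed
  then show "mat_moment (-1) 1 (symmetrization \<mu>) (Suc (2 * m)) = 0" by (simp add: vec_eq_iff)
qed

lemma symmetric_odd_moment_zero:
  fixes \<sigma> :: "real set \<Rightarrow> real^'p^'p"
  assumes ms: "matrix_measure (-1) 1 \<sigma>" and sym: "\<forall>B\<in>sets borel. \<sigma> B = \<sigma> (uminus -` B)"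
  shows "mat_moment (-1) 1 \<sigma> (Suc (2 * m)) = 0"
proof -
  have maps: "\<forall>x\<in>{-1..1::real}. uminus x \<in> {-1..1}" by auto
  have neg: "(uminus :: real \<Rightarrow> real) \<in> borel_measurable borel" by simp
  have "mat_moment (-1) 1 \<sigma> (Suc (2 * m)) $ i $ j = 0" for i j
  proof -
    have s: "signed_borel_measure (-1) 1 (\<lambda>B. \<sigma> B $ i $ j)" using matrix_measure_entry[OF ms] .
    have odd_power: "(\<lambda>x::real. (- x) ^ Suc (2 * m)) = (\<lambda>x. - (x ^ Suc (2 * m)))" by simp
    have "mat_moment (-1) 1 \<sigma> (Suc (2 * m)) = mat_moment (-1) 1 (\<lambda>B. \<sigma> (uminus -` B)) (Suc (2 * m))"
      using sym by (intro mat_moment_cong) auto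
    also have "\<dots> $ i $ j = signed_integral (-1) 1 (\<lambda>B. \<sigma> B $ i $ j) (\<lambda>x. (- x) ^ Suc (2 * m))"
      unfolding mat_moment_image[OF ms neg maps] by simp
    also have "\<dots> = - signed_integral (-1) 1 (\<lambda>B. \<sigma> B $ i $ j) (\<lambda>x. x ^ Suc (2 * m))"
      unfolding odd_power by (rule signed_integral_uminus[OF s _ power_bounded_on_interval]) simp
    also have "\<dots> = - (mat_moment (-1) 1 \<sigma> (Suc (2 * m)) $ i $ j)" by (simp add: mat_moment_def)
    finally show ?thesis by simp
  qed
  then show ?thesis by (simp add: vec_eq_iff)
qed

text \<open>If \<open>\<sigma>([-x, x]) = \<mu>([0, x\<^sup>2])\<close>, the image of \<open>\<sigma>\<close> under the square map has the same
  distribution function as \<open>\<mu>\<close>, hence equals \<open>\<mu>\<close>, so \<open>T\<^sub>2\<^sub>j(\<sigma>) = T\<^sub>j(\<mu>)\<close>.\<close>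

lemma square_preimage_atMost: "(0::real) \<le> t \<Longrightarrow> (\<lambda>x. x^2) -` {..t} = {-sqrt t..sqrt t}"
  by (auto, (metis abs_le_iff minus_le_iff real_le_rsqrt real_sqrt_abs real_sqrt_le_iff sqrt_le_D)+)

lemma square_image_distribution:
  fixes \<mu> \<sigma> :: "real set \<Rightarrow> real^'p^'p"
  assumes mm: "matrix_measure 0 1 \<mu>" and ms: "matrix_measure (-1) 1 \<sigma>"
    and rel: "\<forall>x \<in> {0..1}. \<sigma> {-x..x} = \<mu> {0..x^2}"
  shows "\<sigma> ((\<lambda>x. x^2) -` {..t}) = \<mu> {..t}"
proof -
  have \<mu>t: "\<mu> {..t} = \<mu> ({..t} \<inter> {0..1})" using matrix_measure_concentrated[OF mm, of "{..t}"] by simp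
  consider (neg) "t < 0" | (mid) "0 \<le> t" "t \<le> 1" | (big) "1 < t" by linarith
  then show ?thesis
  proof cases
    case neg
    then have "(\<lambda>x::real. x^2) -` {..t} = {}" "{..t} \<inter> {0..1} = {}"
      using zero_le_power2 by (auto simp: not_le) (meson le_less_trans not_le zero_le_power2)
    then show ?thesis using matrix_measure_empty[OF ms] matrix_measure_empty[OF mm] \<mu>t by simp
  next
    case mid
    have pre: "(\<lambda>x::real. x^2) -` {..t} = {-sqrt t..sqrt t}" using square_preimage_atMost mid by simp
    have "\<sigma> {-sqrt t..sqrt t} = \<mu> {0..t}" using rel mid by (auto dest: bspec[of _ _ "sqrt t"])
    moreover have "{..t} \<inter> {0..1} = {0..t}" using mid by auto
    ultimately show ?thesis using pre \<mu>t mid by (simp add: min_absorb1)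
  next
    case big
    have pre: "(\<lambda>x::real. x^2) -` {..t} = {-sqrt t..sqrt t}" using square_preimage_atMost big by simp
    have "\<sigma> {-sqrt t..sqrt t} = \<sigma> ({-sqrt t..sqrt t} \<inter> {-1..1})"
      using matrix_measure_concentrated[OF ms, of "{-sqrt t..sqrt t}"] by simp
    also have "{-sqrt t..sqrt t} \<inter> {-1..1} = {-1..1::real}" using big by auto
    finally have "\<sigma> {-sqrt t..sqrt t} = mat 1" using ms unfolding matrix_measure_def by simp
    moreover have "{..t} \<inter> {0..1} = {0..1}" using big by auto
    ultimately show ?thesis using pre \<mu>t mm unfolding matrix_measure_def by simp
  qed
qed

lemma even_moment_square_relation:
  fixes \<mu> \<sigma> :: "real set \<Rightarrow> real^'p^'p"
  assumes mm: "matrix_measure 0 1 \<mu>" and ms: "matrix_measure (-1) 1 \<sigma>"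
    and rel: "\<forall>x \<in> {0..1}. \<sigma> {-x..x} = \<mu> {0..x^2}"
  shows "mat_moment (-1) 1 \<sigma> (2 * j) = mat_moment 0 1 \<mu> j"
proof -
  have "\<forall>B\<in>sets borel. \<sigma> ((\<lambda>x. x^2) -` B) = \<mu> B"
    by (rule matrix_measure_unique[OF matrix_measure_square_image[OF ms] mm
          square_image_distribution[OF mm ms rel]])
  then have "mat_moment 0 1 (\<lambda>B. \<sigma> ((\<lambda>x. x^2) -` B)) j = mat_moment 0 1 \<mu> j"
    by (rule mat_moment_cong)
  then show ?thesis using mat_moment_square_image[OF ms] by simp
qed

lemma moment_range_square:
  fixes \<mu> \<sigma> :: "real set \<Rightarrow> real^'p^'p"
  assumes even: "\<And>j. mat_moment (-1) 1 \<sigma> (2 * j) = mat_moment 0 1 \<mu> j"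
    and odd: "\<And>j. mat_moment (-1) 1 \<sigma> (Suc (2 * j)) = 0"
  shows "moment_range (-1) 1 \<sigma> (2 * n) = moment_range 0 1 \<mu> n"
proof (intro equalityI subsetI)
  fix T assume "T \<in> moment_range (-1) 1 \<sigma> (2 * n)"
  then obtain \<sigma>' where \<sigma>': "matrix_measure (-1) 1 \<sigma>'"
    and lower: "\<forall>j<2 * n. mat_moment (-1) 1 \<sigma>' j = mat_moment (-1) 1 \<sigma> j"
    and T: "T = mat_moment (-1) 1 \<sigma>' (2 * n)"
    unfolding moment_range_def by auto
  have "\<forall>j<n. mat_moment 0 1 (\<lambda>B. \<sigma>' ((\<lambda>x. x^2) -` B)) j = mat_moment 0 1 \<mu> j"
    using mat_moment_square_image[OF \<sigma>'] lower even by simp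
  moreover have "mat_moment 0 1 (\<lambda>B. \<sigma>' ((\<lambda>x. x^2) -` B)) n = T"
    using mat_moment_square_image[OF \<sigma>'] T by simp
  ultimately show "T \<in> moment_range 0 1 \<mu> n"
    unfolding moment_range_def using matrix_measure_square_image[OF \<sigma>'] by blast
next
  fix T assume "T \<in> moment_range 0 1 \<mu> n"
  then obtain \<mu>' where \<mu>': "matrix_measure 0 1 \<mu>'"
    and lower: "\<forall>j<n. mat_moment 0 1 \<mu>' j = mat_moment 0 1 \<mu> j"
    and T: "T = mat_moment 0 1 \<mu>' n"
    unfolding moment_range_def by auto
  have "mat_moment (-1) 1 (symmetrization \<mu>') j = mat_moment (-1) 1 \<sigma> j" if "j < 2 * n" for j
  proof (cases "even j")
    case True
    then obtain i where j: "j = 2 * i" by (rule evenE)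
    then have "i < n" using that by simp
    then show ?thesis unfolding j mat_moment_symmetrization(1)[OF \<mu>'] even using lower by simp
  next
    case False
    then obtain i where j: "j = Suc (2 * i)" by (metis oddE Suc_eq_plus1)
    show ?thesis unfolding j mat_moment_symmetrization(2)[OF \<mu>'] odd ..
  qed
  moreover have "mat_moment (-1) 1 (symmetrization \<mu>') (2 * n) = T"
    using mat_moment_symmetrization(1)[OF \<mu>'] T by simp
  ultimately show "T \<in> moment_range (-1) 1 \<sigma> (2 * n)"
    unfolding moment_range_def using matrix_measure_symmetrization[OF \<mu>'] by blast
qed

lemma canonical_moment_square_even:
  fixes \<mu> \<sigma> :: "real set \<Rightarrow> real^'p^'p"
  assumes mm: "matrix_measure 0 1 \<mu>" and ms: "matrix_measure (-1) 1 \<sigma>"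
    and sym: "\<forall>B\<in>sets borel. \<sigma> B = \<sigma> (uminus -` B)"
    and rel: "\<forall>x \<in> {0..1}. \<sigma> {-x..x} = \<mu> {0..x^2}"
  shows "canonical_moment (-1) 1 \<sigma> (2 * n) = canonical_moment 0 1 \<mu> n"
proof (rule canonical_moment_affine_range[where c = 1 and C = 0])
  have even: "mat_moment (-1) 1 \<sigma> (2 * j) = mat_moment 0 1 \<mu> j" for j
    by (rule even_moment_square_relation[OF mm ms rel])
  show "moment_range (-1) 1 \<sigma> (2 * n) = (\<lambda>T. 1 *\<^sub>R T + 0) ` moment_range 0 1 \<mu> n"
    using moment_range_square[OF even symmetric_odd_moment_zero[OF ms sym]] by simp
  show "mat_moment (-1) 1 \<sigma> (2 * n) = 1 *\<^sub>R mat_moment 0 1 \<mu> n + 0"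
    using even by simp
qed simp

theorem lemma3p1:
  shows
  "(\<forall>(\<mu> :: real set \<Rightarrow> real^'p^'p) (a::real) (b::real) (n::nat).
      matrix_measure 0 1 \<mu> \<and> a < b \<and> 1 \<le> n \<and>
      canonical_moment 0 1 \<mu> n \<noteq> None \<and>
      canonical_moment a b (\<lambda>B. \<mu> ((\<lambda>x. (b - a) * x + a) -` B)) n \<noteq> None
      \<longrightarrow> canonical_moment a b (\<lambda>B. \<mu> ((\<lambda>x. (b - a) * x + a) -` B)) n
          = canonical_moment 0 1 \<mu> n)
   \<and>
   (\<forall>(\<mu> :: real set \<Rightarrow> real^'p^'p) (a::real) (b::real) (n::nat).
      a < b \<and> matrix_measure a b \<mu> \<and>
      (\<forall>B \<in> sets borel. \<mu> B = \<mu> ((\<lambda>x. a + b - x) -` B)) \<and> 1 \<le> n \<and>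
      canonical_moment a b \<mu> (2 * n - 1) \<noteq> None
      \<longrightarrow> canonical_moment a b \<mu> (2 * n - 1) = Some ((1/2) *\<^sub>R mat 1))
   \<and>
   (\<forall>(\<mu> :: real set \<Rightarrow> real^'p^'p) (\<sigma> :: real set \<Rightarrow> real^'p^'p).
      matrix_measure 0 1 \<mu> \<and> matrix_measure (-1) 1 \<sigma> \<and>
      (\<forall>B \<in> sets borel. \<sigma> B = \<sigma> (uminus -` B)) \<and>
      (\<forall>x \<in> {0..1}. \<sigma> {-x..x} = \<mu> {0..x^2})
      \<longrightarrow> (\<forall>n::nat. 1 \<le> n \<longrightarrow>
            (canonical_moment (-1) 1 \<sigma> (2 * n - 1) \<noteq> None
               \<longrightarrow> canonical_moment (-1) 1 \<sigma> (2 * n - 1) = Some ((1/2) *\<^sub>R mat 1)) \<and>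
            (canonical_moment (-1) 1 \<sigma> (2 * n) \<noteq> None \<and> canonical_moment 0 1 \<mu> n \<noteq> None
               \<longrightarrow> canonical_moment (-1) 1 \<sigma> (2 * n) = canonical_moment 0 1 \<mu> n)))"
proof -
  have odd_index: "1 \<le> n \<Longrightarrow> odd (2 * n - 1)" for n :: nat by presburger
  have reflection_about_0: "(\<lambda>x::real. -1 + 1 - x) = uminus" by auto
  show ?thesis
  proof (intro conjI allI impI, goal_cases)
    case (1 \<mu> a b n)
    then show ?case using canonical_moment_unit_interval_image by blast
  next
    case (2 \<mu> a b n)
    then show ?case using canonical_moment_odd_reflection_symmetric odd_index by blast
  next
    case (3 \<mu> \<sigma> n)
    then show ?case
      using canonical_moment_odd_reflection_symmetric[of "-1" 1 \<sigma>] odd_index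
      unfolding reflection_about_0 by blast
  next
    case (4 \<mu> \<sigma> n)
    then show ?case using canonical_moment_square_even by blast
  qed
qed

end
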